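(* Let $x_1,x_2,y_1,y_2\in\mathbb{R}^2$ be four points not all on one line, let $\mu=\mu_1\delta_{x_1}+\mu_2\delta_{x_2}$, $\nu=\nu_1\delta_{y_1}+\nu_2\delta_{y_2}$ be probability measures with positive weights and $[\mu]=[\nu]=0$, and assume $\langle x_1,y_1\rangle\ge0$ and $|x_1||y_2|\le|x_2||y_1|$. Assume $\angle(x_2-y_2,y_1-x_1)\neq0$, and let $z_0$ be the intersection point of the line through $x_1,y_1$ and the line through $x_2,y_2$. Define $u$ as below. Then $u\in W^{2,\infty}_{\mathrm{loc}}(\mathbb{R}^2)$, and $u\notin C^2(\mathbb{R}^2)$ unless $\langle x_2-y_2,y_1-x_1\rangle=0$. Moreover, $-\mathrm{Id}\le\nabla^2u(x)\le\mathrm{Id}$ for a.e. $x\in\mathbb{R}^2$ if and only if $\langle x_2-y_2,y_1-x_1\rangle\le0$.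
   Context: $\angle(v,w)\in[0,\pi]$ denotes the angle between vectors $v,w$. Set $\alpha=\frac{\pi}{2\,\angle(x_2-y_2,y_1-x_1)}$ and $\beta=\frac{\alpha}{4\alpha-1}$. Use polar coordinates $x\mapsto(\varrho(x),\vartheta(x))\in[0,\infty)\times[0,2\pi)$ with pole $z_0$ ($\varrho(z_0)=0$), oriented so that $\vartheta(x_1)=0$ and $\vartheta(x_2)\in(0,\pi)$. Let $h:\mathbb{R}\to\mathbb{R}$ be $2\pi$-periodic with $h(\theta)=\cos(2\alpha\theta)$ for $\theta\in[0,\pi/(2\alpha))$ and $h(\theta)=\cos(2\beta(2\pi-\theta))$ for $\theta\in[\pi/(2\alpha),2\pi)$. Define $u(x)=\tfrac12\,h(\vartheta(x))\,\varrho(x)^2$. The inequalities $-\mathrm{Id}\le A\le\mathrm{Id}$ are in the sense of quadratic forms. *)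

theory Defs
  imports "HOL-Analysis.Analysis"
begin

definition vec_angle :: "real^2 \<Rightarrow> real^2 \<Rightarrow> real" where
  "vec_angle v w = (if v = 0 \<or> w = 0 then pi / 2
                    else arccos ((v \<bullet> w) / (norm v * norm w)))"

definition perp2 :: "real^2 \<Rightarrow> real^2" where
  "perp2 v = vector [- (v$2), v$1]"

definition polar_rho :: "real^2 \<Rightarrow> real^2 \<Rightarrow> real" where
  "polar_rho z0 x = norm (x - z0)"

text \<open>Polar angle in [0, 2 pi) with pole z0, oriented so that the angle of x1 is 0
  and the angle of x2 lies in (0, pi).\<close>
definition polar_theta :: "real^2 \<Rightarrow> real^2 \<Rightarrow> real^2 \<Rightarrow> real^2 \<Rightarrow> real" where
  "polar_theta z0 x1 x2 x =
     (let e1 = x1 - z0;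
          s = (if (x2 - z0) \<bullet> perp2 e1 \<ge> 0 then 1 else -1 :: real);
          p = x - z0
      in Arg2pi (Complex (p \<bullet> e1) (s * (p \<bullet> perp2 e1))))"

definition prof_h :: "real \<Rightarrow> real \<Rightarrow> real \<Rightarrow> real" where
  "prof_h \<alpha> \<beta> \<theta> =
     (let t = \<theta> - 2 * pi * of_int \<lfloor>\<theta> / (2 * pi)\<rfloor>
      in if t < pi / (2 * \<alpha>) then cos (2 * \<alpha> * t) else cos (2 * \<beta> * (2 * pi - t)))"

definition alpha_of :: "real^2 \<Rightarrow> real^2 \<Rightarrow> real^2 \<Rightarrow> real^2 \<Rightarrow> real" where
  "alpha_of x1 x2 y1 y2 = pi / (2 * vec_angle (x2 - y2) (y1 - x1))"

definition beta_of :: "real \<Rightarrow> real" where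
  "beta_of \<alpha> = \<alpha> / (4 * \<alpha> - 1)"

definition u_fun :: "real^2 \<Rightarrow> real^2 \<Rightarrow> real^2 \<Rightarrow> real^2 \<Rightarrow> real^2 \<Rightarrow> real^2 \<Rightarrow> real" where
  "u_fun x1 x2 y1 y2 z0 x =
     (let \<alpha> = alpha_of x1 x2 y1 y2; \<beta> = beta_of \<alpha>
      in 1/2 * prof_h \<alpha> \<beta> (polar_theta z0 x1 x2 x) * (polar_rho z0 x)^2)"

definition pd :: "'n::finite \<Rightarrow> (real^'n \<Rightarrow> real) \<Rightarrow> real^'n \<Rightarrow> real" where
  "pd i f = (\<lambda>x. frechet_derivative f (at x) (axis i 1))"

fun Ck :: "nat \<Rightarrow> (real^'n::finite \<Rightarrow> real) \<Rightarrow> bool" where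
  "Ck 0 f = continuous_on UNIV f"
| "Ck (Suc k) f = (continuous_on UNIV f \<and> (\<forall>x. f differentiable (at x)) \<and> (\<forall>i. Ck k (pd i f)))"

definition smooth_fun :: "(real^'n::finite \<Rightarrow> real) \<Rightarrow> bool" where
  "smooth_fun f = (\<forall>k. Ck k f)"

definition test_fun :: "(real^'n::finite \<Rightarrow> real) \<Rightarrow> bool" where
  "test_fun \<phi> = (smooth_fun \<phi> \<and> compact (closure {x. \<phi> x \<noteq> 0}))"

definition loc_integrable :: "(real^'n::finite \<Rightarrow> real) \<Rightarrow> bool" where
  "loc_integrable f = (\<forall>K. compact K \<longrightarrow> set_integrable lebesgue K f)"

definition Linf_loc :: "(real^'n::finite \<Rightarrow> real) \<Rightarrow> bool" where
  "Linf_loc f = (f \<in> borel_measurable lebesgue \<and>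
     (\<forall>K. compact K \<longrightarrow> (\<exists>C. AE x in lebesgue. x \<in> K \<longrightarrow> \<bar>f x\<bar> \<le> C)))"

definition weak_pd1 :: "(real^'n::finite \<Rightarrow> real) \<Rightarrow> 'n \<Rightarrow> (real^'n \<Rightarrow> real) \<Rightarrow> bool" where
  "weak_pd1 u i g = (loc_integrable u \<and> loc_integrable g \<and>
     (\<forall>\<phi>. test_fun \<phi> \<longrightarrow>
        (\<integral>x. u x * pd i \<phi> x \<partial>lebesgue) = - (\<integral>x. g x * \<phi> x \<partial>lebesgue)))"

definition weak_pd2 :: "(real^'n::finite \<Rightarrow> real) \<Rightarrow> 'n \<Rightarrow> 'n \<Rightarrow> (real^'n \<Rightarrow> real) \<Rightarrow> bool" where
  "weak_pd2 u i j g = (loc_integrable u \<and> loc_integrable g \<and>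
     (\<forall>\<phi>. test_fun \<phi> \<longrightarrow>
        (\<integral>x. u x * pd i (pd j \<phi>) x \<partial>lebesgue) = (\<integral>x. g x * \<phi> x \<partial>lebesgue)))"

definition W2inf_loc :: "(real^'n::finite \<Rightarrow> real) \<Rightarrow> bool" where
  "W2inf_loc u = (Linf_loc u \<and>
     (\<forall>i. \<exists>g. Linf_loc g \<and> weak_pd1 u i g) \<and>
     (\<forall>i j. \<exists>g. Linf_loc g \<and> weak_pd2 u i j g))"

definition weak_hessian :: "(real^'n::finite \<Rightarrow> real) \<Rightarrow> (real^'n \<Rightarrow> real^'n^'n) \<Rightarrow> bool" where
  "weak_hessian u H = (\<forall>i j. weak_pd2 u i j (\<lambda>x. H x $ i $ j))"

end

theory Submission
  imports Defs
begin

(* In the complex coordinate w of the plane centred at z0 (with x1 on the positive real axis),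
   u is, up to a constant factor, U w = h(arg w) |w|^2 / 2. Off the rays arg w = 0 and
   arg w = pi/(2 alpha) it is smooth, and in the polar frame (radial component a, angular
   component b) its Hessian form is C (a^2 + b^2) - 2 g S a b - 2 g^2 C b^2 with
   C = cos (2 g theta), S = sin (2 g theta) and g = alpha or g = beta < 1/2. This form lies between
   -(a^2 + b^2) and a^2 + b^2 when g <= 1 and exceeds a^2 + b^2 at theta = pi/(4 alpha) when
   alpha > 1; and alpha <= 1 means exactly that the angle is at least pi/2.
   Since h is C^1 across both rays, the gradient of u is Lipschitz, and integration by parts
   along coordinate lines (which cross the rays finitely often) shows that the pointwise
   Hessian is the weak one. Across arg w = 0 the second angular derivative jumps from -4 beta^2
   to -4 alpha^2, so u is never C^2. *)

section \<open>Integration by parts along lines\<close>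

lemma integrable_bounded_support:
  fixes F :: "'a::euclidean_space \<Rightarrow> real"
  assumes F: "F \<in> borel_measurable borel"
    and supp: "\<And>x. norm x > R \<Longrightarrow> F x = 0" and bound: "\<And>x. \<bar>F x\<bar> \<le> B"
  shows "integrable lborel F"
proof -
  have I: "integrable lborel (\<lambda>x::'a. B * indicator (cball 0 R) x)"
    using emeasure_bounded_finite[of "cball (0::'a) R"]
    by (intro integrable_mult_right integrable_real_indicator) auto
  have "AE x in lborel. norm (F x) \<le> norm (B * indicator (cball 0 R) x)"
    using supp bound
    by (intro AE_I2) (auto simp: indicator_def mem_cball dist_norm not_le intro: order_trans[OF _ abs_ge_self])
  then show ?thesis
    using Bochner_Integration.integrable_bound[OF I, of F] F by simp
qed

lemma
  fixes F :: "'a::euclidean_space \<Rightarrow> real"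
  assumes F: "F \<in> borel_measurable borel"
  shows integral_lborel_translate: "integral\<^sup>L lborel (\<lambda>x. F (x + c)) = integral\<^sup>L lborel F"
    and integrable_lborel_translate: "integrable lborel F \<Longrightarrow> integrable lborel (\<lambda>x. F (x + c))"
proof -
  have distr: "distr lborel borel ((+) c) = lborel" by (rule lborel_distr_plus)
  have "integral\<^sup>L lborel F = integral\<^sup>L (distr lborel borel ((+) c)) F" by (simp add: distr)
  also have "\<dots> = integral\<^sup>L lborel (\<lambda>x. F (c + x))"
    by (rule integral_distr) (auto simp: F)
  finally show "integral\<^sup>L lborel (\<lambda>x. F (x + c)) = integral\<^sup>L lborel F" by (simp add: add.commute)
  assume "integrable lborel F"
  then have "integrable (distr lborel borel ((+) c)) F" by (simp add: distr)
  then have "integrable lborel (\<lambda>x. F (c + x))"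
    by (subst integrable_distr_eq[symmetric]) (auto simp: F)
  then show "integrable lborel (\<lambda>x. F (x + c))" by (simp add: add.commute)
qed

lemma difference_quotients_along_line_tendsto:
  fixes F :: "'a::real_normed_vector \<Rightarrow> real"
  assumes "((\<lambda>t. F (x + t *\<^sub>R e)) has_real_derivative D) (at 0)"
  shows "(\<lambda>n. (F (x + (1 / Suc n) *\<^sub>R e) - F x) / (1 / Suc n)) \<longlonglongrightarrow> D"
proof -
  have "((\<lambda>h. (F (x + h *\<^sub>R e) - F (x + 0 *\<^sub>R e)) / h) \<longlongrightarrow> D) (at 0)"
    using assms by (simp add: has_field_derivative_iff)
  moreover have "filterlim (\<lambda>n. 1 / real (Suc n)) (at 0) sequentially"
  proof (rule filterlim_atI)
    show "(\<lambda>n. 1 / real (Suc n)) \<longlonglongrightarrow> 0" using LIMSEQ_Suc[OF lim_inverse_n'] by simp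
  qed simp
  ultimately have "(\<lambda>n. (F (x + (1 / Suc n) *\<^sub>R e) - F (x + 0 *\<^sub>R e)) / (1 / Suc n)) \<longlonglongrightarrow> D"
    by (rule filterlim_compose)
  then show ?thesis by simp
qed

text \<open>Integrals are translation invariant, so the difference quotients of \<open>F\<close> in direction \<open>e\<close>
  integrate to \<open>0\<close>; the Lipschitz bound lets dominated convergence pass this to the derivative.\<close>
lemma integral_line_derivative_eq_0:
  fixes F d :: "'a::euclidean_space \<Rightarrow> real" and e :: 'a
  assumes F: "F \<in> borel_measurable borel" and d: "d \<in> borel_measurable borel"
    and supp: "\<And>x. norm x > R \<Longrightarrow> F x = 0"
    and bound: "\<And>x. \<bar>F x\<bar> \<le> B"
    and lip: "AE x in lborel. \<forall>t. \<bar>t\<bar> \<le> 1 \<longrightarrow> \<bar>F (x + t *\<^sub>R e) - F x\<bar> \<le> L * \<bar>t\<bar>"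
    and deriv: "AE x in lborel. ((\<lambda>t. F (x + t *\<^sub>R e)) has_real_derivative d x) (at 0)"
  shows "integrable lborel d" "integral\<^sup>L lborel d = 0"
proof -
  define t :: "nat \<Rightarrow> real" where "t n = 1 / Suc n" for n
  define q where "q n x = (F (x + t n *\<^sub>R e) - F x) / t n" for n x
  define w where "w x = L * indicator (cball 0 (R + norm e)) x" for x :: 'a
  have t: "0 < t n" "t n \<le> 1" for n by (auto simp: t_def)
  have intF: "integrable lborel F" by (rule integrable_bounded_support[OF F supp bound])
  have q: "q n \<in> borel_measurable lborel" for n
    unfolding q_def using F by measurable
  have q0: "integral\<^sup>L lborel (q n) = 0" for n
  proof -
    have "integral\<^sup>L lborel (q n) = (integral\<^sup>L lborel (\<lambda>x. F (x + t n *\<^sub>R e)) - integral\<^sup>L lborel F) / t n"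
      unfolding q_def using integrable_lborel_translate[OF F intF] intF by simp
    then show ?thesis by (simp add: integral_lborel_translate[OF F])
  qed
  have w: "integrable lborel w"
    unfolding w_def using emeasure_bounded_finite[of "cball (0::'a) (R + norm e)"]
    by (intro integrable_mult_right integrable_real_indicator) auto
  have lim: "AE x in lborel. (\<lambda>n. q n x) \<longlonglongrightarrow> d x"
    using deriv by eventually_elim (unfold q_def t_def, rule difference_quotients_along_line_tendsto)
  have dom: "AE x in lborel. norm (q n x) \<le> w x" for n
    using lip
  proof eventually_elim
    case (elim x)
    show ?case
    proof (cases "norm x \<le> R + norm e")
      case True
      have "\<bar>F (x + t n *\<^sub>R e) - F x\<bar> \<le> L * t n" using elim[rule_format, of "t n"] t[of n] by simp
      then show ?thesis using True t[of n] by (simp add: q_def w_def abs_divide divide_le_eq)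
    next
      case False
      have "norm (x + t n *\<^sub>R e) \<ge> norm x - t n * norm e"
        using norm_triangle_ineq2[of x "- (t n *\<^sub>R e)"] t[of n] by simp
      moreover have "t n * norm e \<le> norm e" using t[of n] by (simp add: mult_left_le_one_le)
      ultimately show ?thesis using False supp[of x] supp[of "x + t n *\<^sub>R e"] norm_ge_zero[of e]
        by (simp add: q_def w_def)
    qed
  qed
  have d': "d \<in> borel_measurable lborel" using d by simp
  show "integrable lborel d" by (rule integrable_dominated_convergence[OF d' q w lim dom])
  have "(\<lambda>n. integral\<^sup>L lborel (q n)) \<longlonglongrightarrow> integral\<^sup>L lborel d"
    by (rule integral_dominated_convergence[OF d' q w lim dom])
  then show "integral\<^sup>L lborel d = 0" by (simp add: q0 LIMSEQ_const_iff)
qed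

lemma abs_diff_le_of_deriv_bound:
  fixes g g' :: "real \<Rightarrow> real"
  assumes S: "finite S" and ab: "a \<le> b" and g: "continuous_on {a..b} g"
    and deriv: "\<And>t. t \<in> {a<..<b} \<Longrightarrow> t \<notin> S \<Longrightarrow> (g has_real_derivative g' t) (at t)"
    and bound: "\<And>t. t \<in> {a<..<b} \<Longrightarrow> t \<notin> S \<Longrightarrow> \<bar>g' t\<bar> \<le> M"
    and M: "M \<ge> 0"
  shows "\<bar>g b - g a\<bar> \<le> M * (b - a)"
proof -
  have ftc: "(g' has_integral (g b - g a)) {a..b}"
    by (rule fundamental_theorem_of_calculus_interior_strong[OF S ab])
      (use deriv g in \<open>auto simp: has_real_derivative_iff_has_vector_derivative\<close>)
  have "finite (S \<union> {a, b})" using S by simp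
  from has_integral_bound_real[OF M this ftc]
  have "norm (g b - g a) \<le> M * Henstock_Kurzweil_Integration.content {a..b}"
    using bound by auto
  then show ?thesis using ab by simp
qed

lemma abs_diff_le_of_deriv_bound_unit_interval:
  fixes g g' :: "real \<Rightarrow> real"
  assumes S: "finite S" and g: "continuous_on UNIV g"
    and deriv: "\<And>t. \<bar>t\<bar> < 1 \<Longrightarrow> t \<notin> S \<Longrightarrow> (g has_real_derivative g' t) (at t)"
    and bound: "\<And>t. \<bar>t\<bar> < 1 \<Longrightarrow> t \<notin> S \<Longrightarrow> \<bar>g' t\<bar> \<le> M"
    and M: "M \<ge> 0" and t: "\<bar>t\<bar> \<le> 1"
  shows "\<bar>g t - g 0\<bar> \<le> M * \<bar>t\<bar>"
proof (cases "t \<ge> 0")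
  case True
  have "\<bar>g t - g 0\<bar> \<le> M * (t - 0)"
    by (rule abs_diff_le_of_deriv_bound[OF S True, where g'=g'])
      (use g continuous_on_subset in blast, (use deriv bound t M in auto))
  then show ?thesis using True by simp
next
  case False
  have "\<bar>g 0 - g t\<bar> \<le> M * (0 - t)"
    by (rule abs_diff_le_of_deriv_bound[OF S, where g'=g'])
      (use False g continuous_on_subset in auto, (use deriv bound t M in auto))
  then show ?thesis using False by (simp add: abs_minus_commute)
qed

lemma continuous_on_bounded_on_cball:
  fixes f :: "'a::euclidean_space \<Rightarrow> real"
  assumes "continuous_on UNIV f"
  obtains B where "B \<ge> 0" "\<And>x. norm x \<le> r \<Longrightarrow> \<bar>f x\<bar> \<le> B"
proof -
  have "continuous_on (cball 0 r) f" using assms continuous_on_subset by blast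
  then obtain B where "B \<ge> 0" "\<And>x. x \<in> cball 0 r \<Longrightarrow> norm (f x) \<le> B"
    using continuous_on_compact_bound[of "cball 0 r" f] by auto
  then show ?thesis using that by (auto simp: mem_cball dist_norm)
qed

lemma has_real_derivative_along_line_shift:
  fixes f :: "'a::real_vector \<Rightarrow> real"
  assumes "((\<lambda>s. f ((x + t *\<^sub>R e) + s *\<^sub>R e)) has_real_derivative D) (at 0)"
  shows "((\<lambda>s. f (x + s *\<^sub>R e)) has_real_derivative D) (at t)"
proof -
  have "((\<lambda>s. f (x + s *\<^sub>R e)) has_real_derivative D) (at (0 + t))"
    using assms by (subst DERIV_shift) (simp add: algebra_simps scaleR_add_left)
  then show ?thesis by simp
qed

lemma line_derivative_outside_support:
  fixes \<phi> :: "'a::real_normed_vector \<Rightarrow> real"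
  assumes supp: "\<And>x. norm x > R \<Longrightarrow> \<phi> x = 0"
    and deriv: "((\<lambda>s. \<phi> (x + s *\<^sub>R e)) has_real_derivative D) (at 0)"
    and x: "norm x > R"
  shows "D = 0"
proof -
  have "open {s::real. R < norm (x + s *\<^sub>R e)}"
    by (intro open_Collect_less continuous_intros)
  then have "\<forall>\<^sub>F s in nhds 0. R < norm (x + s *\<^sub>R e)"
    using eventually_nhds_in_open[OF _, of _ 0] x by force
  then have vanish: "\<forall>\<^sub>F s in nhds 0. \<phi> (x + s *\<^sub>R e) = 0"
    by eventually_elim (use supp in auto)
  have "((\<lambda>s. \<phi> (x + s *\<^sub>R e)) has_real_derivative 0) (at 0)"
    using DERIV_cong_ev[OF refl vanish refl] DERIV_const by blast
  then show ?thesis using deriv DERIV_unique by blast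
qed

lemma lipschitz_along_line:
  fixes f df :: "'a::real_normed_vector \<Rightarrow> real"
  assumes f: "continuous_on UNIV f" and S: "finite S"
    and deriv: "\<And>t. t \<notin> S \<Longrightarrow> ((\<lambda>s. f (x + s *\<^sub>R e)) has_real_derivative df (x + t *\<^sub>R e)) (at t)"
    and bound: "\<And>y. norm y \<le> \<rho> \<Longrightarrow> \<bar>df y\<bar> \<le> M" and M: "M \<ge> 0"
    and near: "\<And>s. \<bar>s\<bar> \<le> 1 \<Longrightarrow> norm (x + s *\<^sub>R e) \<le> \<rho>"
    and t: "\<bar>t\<bar> \<le> 1"
  shows "\<bar>f (x + t *\<^sub>R e) - f x\<bar> \<le> M * \<bar>t\<bar>"
proof -
  have "continuous_on UNIV (\<lambda>s. f (x + s *\<^sub>R e))"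
    by (intro continuous_on_compose2[OF f] continuous_intros) auto
  from abs_diff_le_of_deriv_bound_unit_interval[OF S this, of "\<lambda>s. df (x + s *\<^sub>R e)"]
  show ?thesis using deriv bound near M t by fastforce
qed

definition locally_bounded :: "('a::real_normed_vector \<Rightarrow> real) \<Rightarrow> bool" where
  "locally_bounded f \<longleftrightarrow> (\<forall>r. \<exists>M. \<forall>x. norm x \<le> r \<longrightarrow> \<bar>f x\<bar> \<le> M)"

lemma locally_boundedE:
  assumes "locally_bounded f"
  obtains M where "M \<ge> 0" "\<And>x. norm x \<le> r \<Longrightarrow> \<bar>f x\<bar> \<le> M"
proof -
  obtain M where "\<And>x. norm x \<le> r \<Longrightarrow> \<bar>f x\<bar> \<le> M"
    using assms unfolding locally_bounded_def by blast
  then show ?thesis using that[of "max M 0"] by force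
qed

lemma continuous_imp_locally_bounded:
  fixes f :: "'a::euclidean_space \<Rightarrow> real"
  shows "continuous_on UNIV f \<Longrightarrow> locally_bounded f"
  unfolding locally_bounded_def by (metis continuous_on_bounded_on_cball)

lemma bounded_imp_locally_bounded: "(\<And>x. \<bar>f x\<bar> \<le> C) \<Longrightarrow> locally_bounded f"
  unfolding locally_bounded_def by blast

lemma lipschitz_product_along_line:
  fixes f df \<phi> d\<phi> :: "'a::euclidean_space \<Rightarrow> real" and e :: 'a
  assumes f: "continuous_on UNIV f" and df: "locally_bounded df"
    and \<phi>: "continuous_on UNIV \<phi>" and d\<phi>: "continuous_on UNIV d\<phi>"
    and \<phi>_deriv: "\<And>x. ((\<lambda>s. \<phi> (x + s *\<^sub>R e)) has_real_derivative d\<phi> x) (at 0)"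
    and supp: "\<And>x. norm x > R \<Longrightarrow> \<phi> x = 0"
  obtains L where "\<And>x S t. finite S \<Longrightarrow>
      (\<And>t. t \<notin> S \<Longrightarrow> ((\<lambda>s. f (x + s *\<^sub>R e)) has_real_derivative df (x + t *\<^sub>R e)) (at t)) \<Longrightarrow>
      \<bar>t\<bar> \<le> 1 \<Longrightarrow> \<bar>f (x + t *\<^sub>R e) * \<phi> (x + t *\<^sub>R e) - f x * \<phi> x\<bar> \<le> L * \<bar>t\<bar>"
proof -
  define \<rho> where "\<rho> = R + 2 * norm e"
  obtain Bf where Bf: "Bf \<ge> 0" "\<And>x. norm x \<le> \<rho> \<Longrightarrow> \<bar>f x\<bar> \<le> Bf"
    using continuous_on_bounded_on_cball[OF f] by metis
  obtain B\<phi> where B\<phi>: "B\<phi> \<ge> 0" "\<And>x. norm x \<le> \<rho> \<Longrightarrow> \<bar>\<phi> x\<bar> \<le> B\<phi>"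
    using continuous_on_bounded_on_cball[OF \<phi>] by metis
  obtain Md\<phi> where Md\<phi>: "Md\<phi> \<ge> 0" "\<And>x. norm x \<le> \<rho> \<Longrightarrow> \<bar>d\<phi> x\<bar> \<le> Md\<phi>"
    using continuous_on_bounded_on_cball[OF d\<phi>] by metis
  obtain Mdf where Mdf: "Mdf \<ge> 0" "\<And>x. norm x \<le> \<rho> \<Longrightarrow> \<bar>df x\<bar> \<le> Mdf"
    using locally_boundedE[OF df] by metis
  show thesis
  proof (rule that[of "Bf * Md\<phi> + Mdf * B\<phi>"])
    fix x S and t :: real
    assume S: "finite S" "\<And>t. t \<notin> S \<Longrightarrow> ((\<lambda>s. f (x + s *\<^sub>R e)) has_real_derivative df (x + t *\<^sub>R e)) (at t)"
      and t: "\<bar>t\<bar> \<le> 1"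
    have shift: "norm x - norm e \<le> norm (x + s *\<^sub>R e)" "norm (x + s *\<^sub>R e) \<le> norm x + norm e"
      if "\<bar>s\<bar> \<le> 1" for s
      using norm_triangle_ineq2[of x "- (s *\<^sub>R e)"] norm_triangle_ineq[of x "s *\<^sub>R e"]
        mult_left_le_one_le[OF norm_ge_zero[of e] abs_ge_zero[of s] that] by simp_all
    show "\<bar>f (x + t *\<^sub>R e) * \<phi> (x + t *\<^sub>R e) - f x * \<phi> x\<bar> \<le> (Bf * Md\<phi> + Mdf * B\<phi>) * \<bar>t\<bar>"
    proof (cases "norm x \<le> R + norm e")
      case False
      then show ?thesis using supp shift[OF t] supp[of x] B\<phi> Md\<phi> Mdf Bf by force
    next
      case True
      then have near: "norm (x + s *\<^sub>R e) \<le> \<rho>" if "\<bar>s\<bar> \<le> 1" for s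
        using shift[OF that] by (simp add: \<rho>_def)
      have f_lip: "\<bar>f (x + t *\<^sub>R e) - f x\<bar> \<le> Mdf * \<bar>t\<bar>"
        by (rule lipschitz_along_line[OF f S Mdf(2) Mdf(1) near t])
      have \<phi>_lip: "\<bar>\<phi> (x + t *\<^sub>R e) - \<phi> x\<bar> \<le> Md\<phi> * \<bar>t\<bar>"
        by (rule lipschitz_along_line[OF \<phi> finite.emptyI, where df = d\<phi>])
          (use has_real_derivative_along_line_shift[OF \<phi>_deriv] Md\<phi> near t in auto)
      have "\<bar>f (x + t *\<^sub>R e) * \<phi> (x + t *\<^sub>R e) - f x * \<phi> x\<bar>
          \<le> \<bar>f (x + t *\<^sub>R e)\<bar> * \<bar>\<phi> (x + t *\<^sub>R e) - \<phi> x\<bar> + \<bar>f (x + t *\<^sub>R e) - f x\<bar> * \<bar>\<phi> x\<bar>"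
        unfolding abs_mult[symmetric] by (rule order_trans[OF _ abs_triangle_ineq]) (simp add: algebra_simps)
      also have "\<dots> \<le> Bf * (Md\<phi> * \<bar>t\<bar>) + (Mdf * \<bar>t\<bar>) * B\<phi>"
        using Bf near[OF t] B\<phi> near[of 0] f_lip \<phi>_lip Mdf(1) Md\<phi>(1)
        by (intro add_mono mult_mono) auto
      finally show ?thesis by (simp add: algebra_simps)
    qed
  qed
qed

lemma integration_by_parts_along_line:
  fixes f df \<phi> d\<phi> :: "'a::euclidean_space \<Rightarrow> real" and e :: 'a
  assumes f: "continuous_on UNIV f"
    and df: "df \<in> borel_measurable borel" "locally_bounded df"
    and N: "N \<in> null_sets lebesgue"
    and f_deriv: "\<And>x. x \<notin> N \<Longrightarrow> \<exists>S. finite S \<and> 0 \<notin> S \<and>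
          (\<forall>t. t \<notin> S \<longrightarrow> ((\<lambda>s. f (x + s *\<^sub>R e)) has_real_derivative df (x + t *\<^sub>R e)) (at t))"
    and \<phi>: "continuous_on UNIV \<phi>" and d\<phi>: "continuous_on UNIV d\<phi>"
    and \<phi>_deriv: "\<And>x. ((\<lambda>s. \<phi> (x + s *\<^sub>R e)) has_real_derivative d\<phi> x) (at 0)"
    and supp: "\<And>x. norm x > R \<Longrightarrow> \<phi> x = 0"
  shows "integrable lebesgue (\<lambda>x. df x * \<phi> x)" "integrable lebesgue (\<lambda>x. f x * d\<phi> x)"
    "(\<integral>x. f x * d\<phi> x \<partial>lebesgue) = - (\<integral>x. df x * \<phi> x \<partial>lebesgue)"
proof -
  define F where "F x = f x * \<phi> x" for x
  define d where "d x = df x * \<phi> x + f x * d\<phi> x" for x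
  have fm: "f \<in> borel_measurable borel" and \<phi>m: "\<phi> \<in> borel_measurable borel"
    and d\<phi>m: "d\<phi> \<in> borel_measurable borel"
    using f \<phi> d\<phi> by (simp_all add: borel_measurable_continuous_onI)
  have Fm: "F \<in> borel_measurable borel" and dm: "d \<in> borel_measurable borel"
    unfolding F_def d_def using fm \<phi>m df(1) d\<phi>m by measurable
  have F_supp: "F x = 0" if "norm x > R" for x using supp[OF that] by (simp add: F_def)
  obtain BF where BF: "BF \<ge> 0" "\<And>x. norm x \<le> R \<Longrightarrow> \<bar>F x\<bar> \<le> BF"
    using continuous_on_bounded_on_cball[of F R] f \<phi> unfolding F_def by (metis continuous_on_mult)
  have F_bound: "\<bar>F x\<bar> \<le> BF" for x using BF F_supp[of x] by (cases "norm x \<le> R") auto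
  obtain L where L: "\<And>x S t. finite S \<Longrightarrow>
      (\<And>t. t \<notin> S \<Longrightarrow> ((\<lambda>s. f (x + s *\<^sub>R e)) has_real_derivative df (x + t *\<^sub>R e)) (at t)) \<Longrightarrow>
      \<bar>t\<bar> \<le> 1 \<Longrightarrow> \<bar>F (x + t *\<^sub>R e) - F x\<bar> \<le> L * \<bar>t\<bar>"
    using lipschitz_product_along_line[OF f df(2) \<phi> d\<phi> \<phi>_deriv supp] unfolding F_def by metis
  have AE_N: "AE x in lborel. x \<notin> N"
    using AE_not_in[OF N] by (simp add: AE_completion_iff)
  have lip: "AE x in lborel. \<forall>t. \<bar>t\<bar> \<le> 1 \<longrightarrow> \<bar>F (x + t *\<^sub>R e) - F x\<bar> \<le> L * \<bar>t\<bar>"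
    using AE_N by eventually_elim (use f_deriv L in metis)
  have deriv: "AE x in lborel. ((\<lambda>t. F (x + t *\<^sub>R e)) has_real_derivative d x) (at 0)"
    using AE_N
  proof eventually_elim
    case (elim x)
    then obtain S where "0 \<notin> S"
      "\<And>t. t \<notin> S \<Longrightarrow> ((\<lambda>s. f (x + s *\<^sub>R e)) has_real_derivative df (x + t *\<^sub>R e)) (at t)"
      using f_deriv by blast
    from DERIV_mult[OF this(2)[OF this(1)] \<phi>_deriv[of x]]
    show ?case by (simp add: F_def d_def algebra_simps)
  qed
  have d_int: "integrable lborel d" "integral\<^sup>L lborel d = 0"
    using integral_line_derivative_eq_0[OF Fm dm F_supp F_bound lip deriv] by auto
  obtain B2 where B2: "B2 \<ge> 0" "\<And>x. norm x \<le> R \<Longrightarrow> \<bar>f x * d\<phi> x\<bar> \<le> B2"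
    using continuous_on_bounded_on_cball[of "\<lambda>x. f x * d\<phi> x" R] f d\<phi> by (metis continuous_on_mult)
  have m2: "(\<lambda>x. f x * d\<phi> x) \<in> borel_measurable borel" using fm d\<phi>m by measurable
  have m3: "(\<lambda>x. df x * \<phi> x) \<in> borel_measurable borel" using df(1) \<phi>m by measurable
  have I2: "integrable lborel (\<lambda>x. f x * d\<phi> x)"
    by (rule integrable_bounded_support[OF m2, of R "B2"])
      (use line_derivative_outside_support[OF supp \<phi>_deriv] B2 in \<open>force, metis mult_zero_right not_le abs_zero\<close>)
  have I3: "integrable lborel (\<lambda>x. df x * \<phi> x)"
    using Bochner_Integration.integrable_diff[OF d_int(1) I2] by (simp add: d_def)
  show "integrable lebesgue (\<lambda>x. df x * \<phi> x)" "integrable lebesgue (\<lambda>x. f x * d\<phi> x)"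
    using I2 I3 m2 m3 by (simp_all add: integrable_completion)
  have "integral\<^sup>L lborel d = integral\<^sup>L lborel (\<lambda>x. df x * \<phi> x) + integral\<^sup>L lborel (\<lambda>x. f x * d\<phi> x)"
    unfolding d_def using I2 I3 by simp
  then show "(\<integral>x. f x * d\<phi> x \<partial>lebesgue) = - (\<integral>x. df x * \<phi> x \<partial>lebesgue)"
    using d_int(2) m2 m3 by (simp add: integral_completion)
qed

section \<open>Partial derivatives and test functions\<close>

lemma has_real_derivative_along_line:
  fixes f :: "'a::real_normed_vector \<Rightarrow> real"
  assumes "(f has_derivative f') (at (x + t *\<^sub>R e))"
  shows "((\<lambda>s. f (x + s *\<^sub>R e)) has_real_derivative f' e) (at t)"
proof -
  have "((\<lambda>s::real. x + s *\<^sub>R e) has_derivative (\<lambda>s. s *\<^sub>R e)) (at t)"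
    by (auto intro!: derivative_eq_intros)
  from has_derivative_compose[OF this assms]
  have "((\<lambda>s. f (x + s *\<^sub>R e)) has_derivative (\<lambda>s. f' (s *\<^sub>R e))) (at t)" .
  moreover have "(\<lambda>s. f' (s *\<^sub>R e)) = (*) (f' e)"
    using has_derivative_linear[OF assms] by (auto simp: linear_cmul mult.commute)
  ultimately show ?thesis by (simp add: has_field_derivative_def)
qed

lemma pd_has_real_derivative_along_axis:
  fixes f :: "real^'n \<Rightarrow> real"
  assumes "f differentiable (at x)"
  shows "((\<lambda>s. f (x + s *\<^sub>R axis i 1)) has_real_derivative pd i f x) (at 0)"
  unfolding pd_def using assms
  by (intro has_real_derivative_along_line) (simp add: frechet_derivative_works[symmetric])

lemma pd_eq_has_derivative:
  fixes F :: "real^'n \<Rightarrow> real"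
  assumes "\<And>x. (F has_derivative F' x) (at x)"
  shows "pd i F = (\<lambda>x. F' x (axis i 1))"
  unfolding pd_def using assms frechet_derivative_at by metis

lemma smooth_funD:
  assumes "smooth_fun f"
  shows "continuous_on UNIV f" "f differentiable (at x)" "smooth_fun (pd i f)"
proof -
  have Ck: "Ck k f" for k using assms by (simp add: smooth_fun_def)
  show "continuous_on UNIV f" using Ck[of 0] by simp
  show "f differentiable (at x)" using Ck[of 1] by simp
  show "smooth_fun (pd i f)" unfolding smooth_fun_def using Ck[of "Suc k" for k] by simp
qed

lemma pd_eq_0_outside_support:
  fixes f :: "real^'n \<Rightarrow> real"
  assumes "x \<notin> closure {y. f y \<noteq> 0}"
  shows "pd i f x = 0"
proof -
  have "((\<lambda>y. 0) has_derivative (\<lambda>v. 0)) (at x)" by simp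
  then have "(f has_derivative (\<lambda>v. 0)) (at x)"
    by (rule has_derivative_transform_within_open[OF _ open_Compl[OF closed_closure]])
      (use assms closure_subset[of "{y. f y \<noteq> 0}"] in auto)
  then show ?thesis unfolding pd_def using frechet_derivative_at by metis
qed

lemma test_fun_pd:
  assumes "test_fun \<phi>"
  shows "test_fun (pd i \<phi>)"
proof -
  have "closure {y. pd i \<phi> y \<noteq> 0} \<subseteq> closure {y. \<phi> y \<noteq> 0}"
    using pd_eq_0_outside_support by (intro closure_minimal) auto
  then show ?thesis
    using assms smooth_funD(3) unfolding test_fun_def
    by (meson bounded_subset closed_closure compact_eq_bounded_closed)
qed

lemma test_funD:
  assumes "test_fun \<phi>"
  shows "continuous_on UNIV \<phi>" "\<phi> differentiable (at x)" "\<exists>R. \<forall>x. norm x > R \<longrightarrow> \<phi> x = 0"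
proof -
  show "continuous_on UNIV \<phi>" "\<phi> differentiable (at x)"
    using assms smooth_funD(1,2) unfolding test_fun_def by blast+
  obtain R where "\<forall>y\<in>closure {y. \<phi> y \<noteq> 0}. norm y \<le> R"
    using assms compact_imp_bounded bounded_iff unfolding test_fun_def by metis
  then have "\<forall>x. norm x > R \<longrightarrow> \<phi> x = 0" using closure_subset[of "{y. \<phi> y \<noteq> 0}"] by force
  then show "\<exists>R. \<forall>x. norm x > R \<longrightarrow> \<phi> x = 0" by blast
qed

lemma locally_bounded_imp_loc_integrable:
  fixes f :: "real^'n \<Rightarrow> real"
  assumes f: "f \<in> borel_measurable borel" "locally_bounded f"
  shows "loc_integrable f"
  unfolding loc_integrable_def
proof (intro allI impI)
  fix K :: "(real^'n) set" assume K: "compact K"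
  obtain r where r: "\<And>x. x \<in> K \<Longrightarrow> norm x \<le> r" using compact_imp_bounded[OF K] bounded_iff by blast
  obtain M where M: "M \<ge> 0" "\<And>x. norm x \<le> r \<Longrightarrow> \<bar>f x\<bar> \<le> M" using locally_boundedE[OF f(2)] by blast
  have m: "(\<lambda>x. indicator K x *\<^sub>R f x) \<in> borel_measurable borel"
    using f(1) K by (simp add: compact_imp_closed borel_closed)
  have "integrable lborel (\<lambda>x. indicator K x *\<^sub>R f x)"
    by (rule integrable_bounded_support[OF m, of r M]) (use r M in \<open>force simp: indicator_def\<close>)+
  then show "set_integrable lebesgue K f"
    unfolding set_integrable_def using m by (simp add: integrable_completion)
qed

lemma locally_bounded_imp_Linf_loc:
  fixes f :: "real^'n \<Rightarrow> real"
  assumes f: "f \<in> borel_measurable borel" "locally_bounded f"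
  shows "Linf_loc f"
  unfolding Linf_loc_def
proof (intro conjI allI impI)
  show "f \<in> borel_measurable lebesgue" using f(1) by (simp add: measurable_completion)
  fix K :: "(real^'n) set" assume K: "compact K"
  obtain r where r: "\<And>x. x \<in> K \<Longrightarrow> norm x \<le> r" using compact_imp_bounded[OF K] bounded_iff by blast
  obtain M where "\<And>x. norm x \<le> r \<Longrightarrow> \<bar>f x\<bar> \<le> M" using locally_boundedE[OF f(2)] by blast
  then show "\<exists>C. AE x in lebesgue. x \<in> K \<longrightarrow> \<bar>f x\<bar> \<le> C"
    using r by (intro exI[of _ M] AE_I2) auto
qed

section \<open>A smooth bump function\<close>

text \<open>The functions \<open>t \<mapsto> Q(1/t) e\<^sup>-\<^sup>1\<^sup>/\<^sup>t\<close> (extended by \<open>0\<close> for \<open>t \<le> 0\<close>) form a class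
  closed under differentiation; this is how smoothness of the standard bump function is obtained.\<close>
definition exp_recip_poly :: "real poly \<Rightarrow> real \<Rightarrow> real" where
  "exp_recip_poly Q t = (if t > 0 then poly Q (1/t) * exp (- (1/t)) else 0)"

definition exp_recip_poly_deriv :: "real poly \<Rightarrow> real poly" where
  "exp_recip_poly_deriv Q = [:0,0,1:] * (Q - pderiv Q)"

lemma poly_times_exp_neg_tendsto_0: "((\<lambda>s::real. poly P s * exp (- s)) \<longlongrightarrow> 0) at_top"
proof -
  have eq: "poly P s * exp (- s) = (\<Sum>i\<le>degree P. coeff P i * (s ^ i / exp s))" for s :: real
    by (simp add: poly_altdef sum_distrib_right exp_minus divide_inverse mult.assoc)
  have "((\<lambda>s. \<Sum>i\<le>degree P. coeff P i * (s ^ i / exp s)) \<longlongrightarrow> (\<Sum>i\<le>degree P. coeff P i * 0)) at_top"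
    by (intro tendsto_sum tendsto_mult tendsto_const tendsto_power_div_exp_0)
  then show ?thesis by (simp add: eq)
qed

lemma exp_recip_poly_has_real_derivative_0:
  "(exp_recip_poly Q has_real_derivative 0) (at 0)"
proof -
  let ?q = "\<lambda>h. (exp_recip_poly Q (0 + h) - exp_recip_poly Q 0) / h"
  have "(?q \<longlongrightarrow> 0) (at 0)"
  proof (rule filterlim_split_at)
    have "\<forall>\<^sub>F h in at_left (0::real). ?q h = 0"
      by (auto simp: eventually_at_left_field exp_recip_poly_def intro: exI[of _ "-1"])
    then show "(?q \<longlongrightarrow> 0) (at_left 0)" by (rule tendsto_eventually)
    have ev: "\<forall>\<^sub>F h in at_right (0::real). ?q h = poly ([:0,1:] * Q) (inverse h) * exp (- inverse h)"
      by (auto simp: eventually_at_right_field exp_recip_poly_def field_simps intro!: exI[of _ 1])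
    have "((\<lambda>h. poly ([:0,1:] * Q) (inverse h) * exp (- inverse h)) \<longlongrightarrow> 0) (at_right 0)"
      by (rule filterlim_compose[OF poly_times_exp_neg_tendsto_0[of "[:0,1:] * Q"] filterlim_inverse_at_top_right])
    then show "(?q \<longlongrightarrow> 0) (at_right 0)" using tendsto_cong[OF ev] by blast
  qed
  then show ?thesis by (simp add: has_field_derivative_iff exp_recip_poly_def)
qed

lemma exp_recip_poly_has_real_derivative:
  "(exp_recip_poly Q has_real_derivative exp_recip_poly (exp_recip_poly_deriv Q) t) (at t)"
proof -
  consider "t > 0" | "t < 0" | "t = 0" by linarith
  then show ?thesis
  proof cases
    case 1
    have inv: "((\<lambda>t. 1/t) has_real_derivative - 1 / t\<^sup>2) (at t)"
      using 1 by (auto intro!: derivative_eq_intros simp: power2_eq_square)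
    have "((\<lambda>t. poly Q (1/t) * exp (- (1/t))) has_real_derivative
        poly (pderiv Q) (1/t) * (- 1 / t\<^sup>2) * exp (- (1/t)) + exp (- (1/t)) * (1 / t\<^sup>2) * poly Q (1/t)) (at t)"
      using DERIV_mult[OF DERIV_chain2[OF poly_DERIV inv] DERIV_chain2[OF DERIV_exp DERIV_minus[OF inv]]]
      by simp
    also have "poly (pderiv Q) (1/t) * (- 1 / t\<^sup>2) * exp (- (1/t)) + exp (- (1/t)) * (1 / t\<^sup>2) * poly Q (1/t)
        = exp_recip_poly (exp_recip_poly_deriv Q) t"
      using 1 by (simp add: exp_recip_poly_def exp_recip_poly_deriv_def power2_eq_square field_simps)
    moreover have ev: "\<forall>\<^sub>F s in nhds t. exp_recip_poly Q s = poly Q (1/s) * exp (- (1/s))"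
      using eventually_nhds_in_open[of "{0<..}" t] 1
      by (auto elim!: eventually_mono simp: exp_recip_poly_def)
    ultimately show ?thesis using DERIV_cong_ev[OF refl ev refl] by simp
  next
    case 2
    have ev: "\<forall>\<^sub>F s in nhds t. exp_recip_poly Q s = 0"
      using eventually_nhds_in_open[of "{..<0}" t] 2
      by (auto elim!: eventually_mono simp: exp_recip_poly_def)
    have "(exp_recip_poly Q has_real_derivative 0) (at t)"
      using DERIV_cong_ev[OF refl ev refl] DERIV_const by simp
    then show ?thesis using 2 by (simp add: exp_recip_poly_def)
  next
    case 3
    then show ?thesis using exp_recip_poly_has_real_derivative_0 by (simp add: exp_recip_poly_def)
  qed
qed

inductive smooth_expr :: "(real^'n \<Rightarrow> real) \<Rightarrow> bool" where
  smooth_expr_const: "smooth_expr (\<lambda>x. c)"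
| smooth_expr_coord: "smooth_expr (\<lambda>x. x $ k)"
| smooth_expr_add: "smooth_expr f \<Longrightarrow> smooth_expr g \<Longrightarrow> smooth_expr (\<lambda>x. f x + g x)"
| smooth_expr_mult: "smooth_expr f \<Longrightarrow> smooth_expr g \<Longrightarrow> smooth_expr (\<lambda>x. f x * g x)"
| smooth_expr_exp_recip_poly: "smooth_expr f \<Longrightarrow> smooth_expr (\<lambda>x. exp_recip_poly Q (f x))"

lemma smooth_expr_differentiable_pd:
  fixes f :: "real^'n \<Rightarrow> real"
  assumes "smooth_expr f"
  shows "(\<forall>x. f differentiable (at x)) \<and> (\<forall>i. smooth_expr (pd i f))"
  using assms
proof induction
  case (smooth_expr_const c)
  have "pd i (\<lambda>x::real^'n. c) = (\<lambda>x. 0)" for i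
    using pd_eq_has_derivative[of "\<lambda>x::real^'n. c" "\<lambda>x v. 0"] by simp
  then show ?case by (auto intro: smooth_expr.smooth_expr_const)
next
  case (smooth_expr_coord k)
  have d: "((\<lambda>x::real^'n. x $ k) has_derivative (\<lambda>v. v $ k)) (at x)" for x
    by (rule bounded_linear.has_derivative[OF bounded_linear_vec_nth]) (rule has_derivative_ident)
  have "pd i (\<lambda>x::real^'n. x $ k) = (\<lambda>x. axis i 1 $ k)" for i
    using pd_eq_has_derivative[of "\<lambda>x::real^'n. x $ k" "\<lambda>x v. v $ k", OF d] by simp
  then show ?case using d by (auto intro: smooth_expr.smooth_expr_const simp: differentiable_def)
next
  case (smooth_expr_add f g)
  have d: "((\<lambda>x. f x + g x) has_derivative
      (\<lambda>v. frechet_derivative f (at x) v + frechet_derivative g (at x) v)) (at x)" for x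
    using smooth_expr_add.IH by (intro has_derivative_add) (auto simp: frechet_derivative_works[symmetric])
  have "pd i (\<lambda>x. f x + g x) = (\<lambda>x. pd i f x + pd i g x)" for i
    using pd_eq_has_derivative[OF d] by (simp add: pd_def)
  then show ?case using d smooth_expr_add.IH
    by (auto intro: smooth_expr.smooth_expr_add simp: differentiable_def)
next
  case (smooth_expr_mult f g)
  have d: "((\<lambda>x. f x * g x) has_derivative (\<lambda>v. f x * frechet_derivative g (at x) v +
      frechet_derivative f (at x) v * g x)) (at x)" for x
    using smooth_expr_mult.IH by (intro has_derivative_mult) (auto simp: frechet_derivative_works[symmetric])
  have "pd i (\<lambda>x. f x * g x) = (\<lambda>x. f x * pd i g x + pd i f x * g x)" for i
    using pd_eq_has_derivative[OF d] by (simp add: pd_def)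
  then show ?case using d smooth_expr_mult.IH smooth_expr_mult.hyps
    by (auto intro!: smooth_expr.smooth_expr_add smooth_expr.smooth_expr_mult simp: differentiable_def)
next
  case (smooth_expr_exp_recip_poly f Q)
  have d: "((\<lambda>x. exp_recip_poly Q (f x)) has_derivative
      (\<lambda>v. exp_recip_poly (exp_recip_poly_deriv Q) (f x) * frechet_derivative f (at x) v)) (at x)" for x
  proof -
    have "(f has_derivative frechet_derivative f (at x)) (at x)"
      using smooth_expr_exp_recip_poly.IH by (auto simp: frechet_derivative_works[symmetric])
    moreover have "(exp_recip_poly Q has_derivative
        (*) (exp_recip_poly (exp_recip_poly_deriv Q) (f x))) (at (f x))"
      using exp_recip_poly_has_real_derivative[of Q "f x"] by (simp add: has_field_derivative_def)
    ultimately show ?thesis by (rule has_derivative_compose)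
  qed
  have "pd i (\<lambda>x. exp_recip_poly Q (f x)) = (\<lambda>x. exp_recip_poly (exp_recip_poly_deriv Q) (f x) * pd i f x)" for i
    using pd_eq_has_derivative[OF d] by (simp add: pd_def)
  then show ?case using d smooth_expr_exp_recip_poly.IH smooth_expr_exp_recip_poly.hyps
    by (auto intro!: smooth_expr.smooth_expr_mult smooth_expr.smooth_expr_exp_recip_poly simp: differentiable_def)
qed

lemma smooth_expr_imp_Ck:
  fixes f :: "real^'n \<Rightarrow> real"
  shows "smooth_expr f \<Longrightarrow> Ck k f"
  by (induction k arbitrary: f) (auto dest!: smooth_expr_differentiable_pd
      intro!: continuous_at_imp_continuous_on differentiable_imp_continuous_within)

lemma smooth_expr_sum:
  fixes g :: "'i \<Rightarrow> real^'n \<Rightarrow> real"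
  shows "finite A \<Longrightarrow> (\<And>a. a \<in> A \<Longrightarrow> smooth_expr (g a)) \<Longrightarrow> smooth_expr (\<lambda>x. \<Sum>a\<in>A. g a x)"
proof (induction A rule: finite_induct)
  case empty
  then show ?case using smooth_expr_const[of 0] by simp
next
  case (insert a A)
  then show ?case by (simp add: smooth_expr_add)
qed

lemma bump_test_fun_exists:
  fixes x0 :: "real^'n"
  assumes r: "r > 0"
  shows "\<exists>\<phi>. test_fun \<phi> \<and> (\<forall>x. \<phi> x \<ge> 0) \<and> \<phi> x0 > 0 \<and> (\<forall>x. \<phi> x \<noteq> 0 \<longrightarrow> dist x x0 < r)"
proof -
  define \<phi> where "\<phi> = (\<lambda>x::real^'n. exp_recip_poly 1 (r^2 + (-1) * (\<Sum>k\<in>UNIV. (x$k + - x0$k) * (x$k + - x0$k))))"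
  have sk: "smooth_expr (\<lambda>x::real^'n. (x$k + - x0$k) * (x$k + - x0$k))" for k
    by (intro smooth_expr_mult smooth_expr_add smooth_expr_coord smooth_expr_const)
  have s1: "smooth_expr (\<lambda>x::real^'n. \<Sum>k\<in>UNIV. (x$k + - x0$k) * (x$k + - x0$k))"
    by (rule smooth_expr_sum) (use sk in auto)
  have "smooth_expr \<phi>" unfolding \<phi>_def
    by (intro smooth_expr_exp_recip_poly smooth_expr_add smooth_expr_const smooth_expr_mult s1)
  then have smooth: "smooth_fun \<phi>" unfolding smooth_fun_def using smooth_expr_imp_Ck by blast
  have sq: "(\<Sum>k\<in>UNIV. (x$k + - x0$k) * (x$k + - x0$k)) = (dist x x0)^2" for x
    by (simp add: dist_norm power2_norm_eq_inner inner_vec_def)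
  have phi_eq: "\<phi> x = exp_recip_poly 1 (r^2 - (dist x x0)^2)" for x unfolding \<phi>_def sq by simp
  have nz: "dist x x0 < r" if "\<phi> x \<noteq> 0" for x
  proof -
    have "r^2 - (dist x x0)^2 > 0" using that by (auto simp: phi_eq exp_recip_poly_def split: if_splits)
    then have "(dist x x0)^2 < r^2" by simp
    then show ?thesis using r by (simp add: power_less_imp_less_base)
  qed
  have "closure {x. \<phi> x \<noteq> 0} \<subseteq> cball x0 r"
    using nz by (intro closure_minimal) (auto simp: dist_commute less_imp_le)
  then have "compact (closure {x. \<phi> x \<noteq> 0})"
    using compact_cball bounded_subset compact_eq_bounded_closed compact_imp_bounded closed_closure by metis
  then have "test_fun \<phi>" using smooth unfolding test_fun_def by blast
  moreover have "\<phi> x \<ge> 0" for x by (simp add: phi_eq exp_recip_poly_def)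
  moreover have "\<phi> x0 > 0" using r by (simp add: phi_eq exp_recip_poly_def)
  ultimately show ?thesis using nz by blast
qed

section \<open>Functions with a bounded Hessian off a null set\<close>

lemma inner_matrix_vector_mult_eq_sum:
  fixes A :: "real^'n^'n" and v :: "real^'n"
  shows "v \<bullet> (A *v v) = (\<Sum>i\<in>UNIV. \<Sum>j\<in>UNIV. v$i * v$j * A$i$j)"
  by (simp add: inner_vec_def matrix_vector_mult_def sum_distrib_left mult_ac)

lemma integral_pos_if_continuous_nonneg:
  fixes g :: "real^'n \<Rightarrow> real"
  assumes g: "continuous_on UNIV g" "\<And>x. g x \<ge> 0" "g x0 > 0" and int: "integrable lebesgue g"
  shows "(\<integral>x. g x \<partial>lebesgue) > 0"
proof -
  have gm: "g \<in> borel_measurable borel" using g(1) by (rule borel_measurable_continuous_onI)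
  have "isCont g x0" using g(1) by (simp add: continuous_on_eq_continuous_at)
  then obtain \<delta> where \<delta>: "\<delta> > 0" "\<And>x. dist x x0 < \<delta> \<Longrightarrow> dist (g x) (g x0) < g x0 / 2"
    using g(3) unfolding continuous_at_eps_delta by (metis half_gt_zero)
  have below: "g x0 / 2 * indicator (ball x0 \<delta>) x \<le> g x" for x
  proof (cases "x \<in> ball x0 \<delta>")
    case True
    then have "dist (g x) (g x0) < g x0 / 2" using \<delta>(2)[of x] by (simp add: dist_commute)
    then show ?thesis using True abs_ge_minus_self[of "g x - g x0"] unfolding dist_real_def by simp
  qed (use g(2) in auto)
  have "integrable lborel (\<lambda>x::real^'n. g x0 / 2 * indicator (ball x0 \<delta>) x)"
    using emeasure_lborel_ball_finite[of x0 \<delta>] by (intro integrable_mult_right integrable_real_indicator) auto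
  from integral_mono[OF this _ below]
  have "g x0 / 2 * Henstock_Kurzweil_Integration.content (ball x0 \<delta>) \<le> (\<integral>x. g x \<partial>lborel)"
    using int gm by (simp add: integrable_completion)
  moreover have "g x0 / 2 * Henstock_Kurzweil_Integration.content (ball x0 \<delta>) > 0"
    using content_ball_pos[OF \<delta>(1)] g(3) by simp
  ultimately show ?thesis using gm by (simp add: integral_completion)
qed

lemma integrable_mult_test_fun:
  fixes g \<phi> :: "real^'n \<Rightarrow> real"
  assumes g: "loc_integrable g" and \<phi>: "test_fun \<phi>"
  shows "integrable lebesgue (\<lambda>x. g x * \<phi> x)"
proof -
  obtain R where R: "\<And>x. norm x > R \<Longrightarrow> \<phi> x = 0" using test_funD(3)[OF \<phi>] by blast
  let ?K = "cball (0::real^'n) R"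
  have gK: "integrable lebesgue (\<lambda>x. indicator ?K x *\<^sub>R g x)"
    using g unfolding loc_integrable_def set_integrable_def by auto
  obtain B where B: "B \<ge> 0" "\<And>x. norm x \<le> R \<Longrightarrow> \<bar>\<phi> x\<bar> \<le> B"
    using continuous_on_bounded_on_cball[OF test_funD(1)[OF \<phi>]] by metis
  have eq: "g x * \<phi> x = (indicator ?K x *\<^sub>R g x) * \<phi> x" for x
    using R[of x] by (cases "x \<in> ?K") auto
  have "integrable lebesgue (\<lambda>x. (indicator ?K x *\<^sub>R g x) * \<phi> x)"
  proof (rule Bochner_Integration.integrable_bound)
    show "integrable lebesgue (\<lambda>x. B * (indicator ?K x *\<^sub>R g x))" using gK by simp
    show "(\<lambda>x. (indicator ?K x *\<^sub>R g x) * \<phi> x) \<in> borel_measurable lebesgue"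
      using borel_measurable_integrable[OF gK] borel_measurable_continuous_onI[OF test_funD(1)[OF \<phi>]]
      by (measurable, simp add: measurable_completion)
    show "AE x in lebesgue. norm ((indicator ?K x *\<^sub>R g x) * \<phi> x) \<le> norm (B * (indicator ?K x *\<^sub>R g x))"
      using B by (intro AE_I2) (auto simp: abs_mult indicator_def mult.commute intro: mult_right_mono)
  qed
  then show ?thesis by (simp add: eq)
qed

lemma integral_quadratic_form:
  fixes H :: "real^'n \<Rightarrow> real^'n^'n" and \<phi> :: "real^'n \<Rightarrow> real"
  assumes int: "\<And>i j. integrable lebesgue (\<lambda>x. H x $ i $ j * \<phi> x)"
  shows "integrable lebesgue (\<lambda>x. v \<bullet> (H x *v v) * \<phi> x)"
    "(\<integral>x. v \<bullet> (H x *v v) * \<phi> x \<partial>lebesgue) = (\<Sum>i\<in>UNIV. \<Sum>j\<in>UNIV. v$i * v$j * (\<integral>x. H x $ i $ j * \<phi> x \<partial>lebesgue))"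
proof -
  have eq: "v \<bullet> (H x *v v) * \<phi> x = (\<Sum>i\<in>UNIV. \<Sum>j\<in>UNIV. v$i * v$j * (H x $ i $ j * \<phi> x))" for x
    by (simp add: inner_matrix_vector_mult_eq_sum sum_distrib_left mult_ac)
  show "integrable lebesgue (\<lambda>x. v \<bullet> (H x *v v) * \<phi> x)"
    unfolding eq by (intro Bochner_Integration.integrable_sum integrable_mult_right int)
  show "(\<integral>x. v \<bullet> (H x *v v) * \<phi> x \<partial>lebesgue) = (\<Sum>i\<in>UNIV. \<Sum>j\<in>UNIV. v$i * v$j * (\<integral>x. H x $ i $ j * \<phi> x \<partial>lebesgue))"
    unfolding eq using int
    by (simp add: Bochner_Integration.integral_sum Bochner_Integration.integrable_sum)
qed

lemma integration_by_parts_test_fun: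
  fixes f df \<phi> :: "real^'n \<Rightarrow> real"
  assumes f: "continuous_on UNIV f"
    and df: "df \<in> borel_measurable borel" "locally_bounded df"
    and N: "N \<in> null_sets lebesgue"
    and f_deriv: "\<And>x. x \<notin> N \<Longrightarrow> \<exists>S. finite S \<and> 0 \<notin> S \<and> (\<forall>t. t \<notin> S \<longrightarrow>
          ((\<lambda>s. f (x + s *\<^sub>R axis j 1)) has_real_derivative df (x + t *\<^sub>R axis j 1)) (at t))"
    and \<phi>: "test_fun \<phi>"
  shows "(\<integral>x. f x * pd j \<phi> x \<partial>lebesgue) = - (\<integral>x. df x * \<phi> x \<partial>lebesgue)"
proof -
  obtain R where "\<And>x. norm x > R \<Longrightarrow> \<phi> x = 0" using test_funD(3)[OF \<phi>] by blast
  moreover have "((\<lambda>s. \<phi> (x + s *\<^sub>R axis j 1)) has_real_derivative pd j \<phi> x) (at 0)" for x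
    using pd_has_real_derivative_along_axis test_funD(2)[OF \<phi>] by blast
  ultimately show ?thesis
    using integration_by_parts_along_line(3)[OF f df N f_deriv test_funD(1)[OF \<phi>]
        test_funD(1)[OF test_fun_pd[OF \<phi>]]] by blast
qed

locale ae_hessian =
  fixes u :: "real^'n \<Rightarrow> real" and G :: "real^'n \<Rightarrow> real^'n"
    and H :: "real^'n \<Rightarrow> real^'n^'n" and N :: "(real^'n) set" and C :: real
  assumes has_gradient: "\<And>x. (u has_derivative (\<lambda>v. G x \<bullet> v)) (at x)"
    and continuous_gradient: "continuous_on UNIV G"
    and has_hessian: "\<And>x. x \<notin> N \<Longrightarrow> (G has_derivative (\<lambda>v. H x *v v)) (at x)"
    and hessian_measurable: "\<And>i j. (\<lambda>x. H x $ i $ j) \<in> borel_measurable borel"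
    and hessian_bounded: "\<And>x i j. \<bar>H x $ i $ j\<bar> \<le> C"
    and null_N: "N \<in> null_sets lebesgue"
    and finite_N_on_axis_lines: "\<And>x j. x \<notin> N \<Longrightarrow> finite {t. x + t *\<^sub>R axis j 1 \<in> N}"
begin

lemma continuous_u: "continuous_on UNIV u"
  using has_derivative_continuous[OF has_gradient] by (simp add: continuous_at_imp_continuous_on)

lemma gradient_component:
  "continuous_on UNIV (\<lambda>x. G x $ i)" "(\<lambda>x. G x $ i) \<in> borel_measurable borel"
  "locally_bounded (\<lambda>x. G x $ i)"
proof -
  show c: "continuous_on UNIV (\<lambda>x. G x $ i)" using continuous_gradient by (intro continuous_intros)
  show "(\<lambda>x. G x $ i) \<in> borel_measurable borel" using c by (rule borel_measurable_continuous_onI)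
  show "locally_bounded (\<lambda>x. G x $ i)" using c by (rule continuous_imp_locally_bounded)
qed

lemma hessian_entry_locally_bounded: "locally_bounded (\<lambda>x. H x $ i $ j)"
  using hessian_bounded by (rule bounded_imp_locally_bounded)

lemma loc_integrable_u: "loc_integrable u"
  using borel_measurable_continuous_onI[OF continuous_u] continuous_imp_locally_bounded[OF continuous_u]
  by (rule locally_bounded_imp_loc_integrable)

lemma loc_integrable_hessian_entry: "loc_integrable (\<lambda>x. H x $ i $ j)"
  using hessian_measurable hessian_entry_locally_bounded by (rule locally_bounded_imp_loc_integrable)

lemma pd_eq_gradient: "pd i u = (\<lambda>x. G x $ i)"
  using pd_eq_has_derivative[OF has_gradient] by (simp add: inner_axis)

lemma pd_gradient_eq_hessian:
  assumes "x \<notin> N"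
  shows "pd j (\<lambda>x. G x $ i) x = H x $ i $ j"
proof -
  have "((\<lambda>x. G x $ i) has_derivative (\<lambda>v. (H x *v v) $ i)) (at x)"
    using has_hessian[OF assms] by (rule bounded_linear.has_derivative[OF bounded_linear_vec_nth])
  then have "frechet_derivative (\<lambda>x. G x $ i) (at x) = (\<lambda>v. (H x *v v) $ i)"
    using frechet_derivative_at by metis
  then show ?thesis by (simp add: pd_def matrix_vector_mul_component inner_axis)
qed

lemma integral_u_pd:
  assumes "test_fun \<phi>"
  shows "(\<integral>x. u x * pd i \<phi> x \<partial>lebesgue) = - (\<integral>x. G x $ i * \<phi> x \<partial>lebesgue)"
proof (rule integration_by_parts_test_fun[OF continuous_u gradient_component(2,3) _ _ assms])
  show "{} \<in> null_sets lebesgue" by simp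
  fix x
  have "((\<lambda>s. u (x + s *\<^sub>R axis i 1)) has_real_derivative G (x + t *\<^sub>R axis i 1) $ i) (at t)" for t
    using has_real_derivative_along_line[OF has_gradient[of "x + t *\<^sub>R axis i 1"]] by (simp add: inner_axis)
  then show "\<exists>S. finite S \<and> 0 \<notin> S \<and> (\<forall>t. t \<notin> S \<longrightarrow>
      ((\<lambda>s. u (x + s *\<^sub>R axis i 1)) has_real_derivative G (x + t *\<^sub>R axis i 1) $ i) (at t))"
    by (intro exI[of _ "{}"]) auto
qed

lemma integral_gradient_pd:
  assumes "test_fun \<phi>"
  shows "(\<integral>x. G x $ i * pd j \<phi> x \<partial>lebesgue) = - (\<integral>x. H x $ i $ j * \<phi> x \<partial>lebesgue)"
proof (rule integration_by_parts_test_fun[OF gradient_component(1) hessian_measurable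
      hessian_entry_locally_bounded null_N _ assms])
  fix x assume x: "x \<notin> N"
  have "((\<lambda>s. G (x + s *\<^sub>R axis j 1) $ i) has_real_derivative H (x + t *\<^sub>R axis j 1) $ i $ j) (at t)"
    if "x + t *\<^sub>R axis j 1 \<notin> N" for t
    using has_real_derivative_along_line[OF bounded_linear.has_derivative[OF bounded_linear_vec_nth
          has_hessian[OF that]]]
    by (simp add: matrix_vector_mul_component inner_axis)
  then show "\<exists>S. finite S \<and> 0 \<notin> S \<and> (\<forall>t. t \<notin> S \<longrightarrow>
      ((\<lambda>s. G (x + s *\<^sub>R axis j 1) $ i) has_real_derivative H (x + t *\<^sub>R axis j 1) $ i $ j) (at t))"
    using finite_N_on_axis_lines[OF x] x by (intro exI[of _ "{t. x + t *\<^sub>R axis j 1 \<in> N}"]) auto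
qed

lemma integral_u_pd_pd:
  assumes "test_fun \<phi>"
  shows "(\<integral>x. u x * pd i (pd j \<phi>) x \<partial>lebesgue) = (\<integral>x. H x $ i $ j * \<phi> x \<partial>lebesgue)"
  using integral_u_pd[OF test_fun_pd[OF assms]] integral_gradient_pd[OF assms] by simp

lemma weak_hessian: "weak_hessian u H"
  unfolding weak_hessian_def weak_pd2_def
  using loc_integrable_u loc_integrable_hessian_entry integral_u_pd_pd by blast

lemma W2inf_loc: "W2inf_loc u"
  unfolding W2inf_loc_def
proof (intro conjI allI)
  show "Linf_loc u"
    using borel_measurable_continuous_onI[OF continuous_u] continuous_imp_locally_bounded[OF continuous_u]
    by (rule locally_bounded_imp_Linf_loc)
  have "weak_pd1 u i (\<lambda>x. G x $ i)" for i
    unfolding weak_pd1_def using loc_integrable_u integral_u_pd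
      locally_bounded_imp_loc_integrable[OF gradient_component(2,3)] by blast
  then show "\<exists>g. Linf_loc g \<and> weak_pd1 u i g" for i
    using locally_bounded_imp_Linf_loc[OF gradient_component(2,3)] by blast
  show "\<exists>g. Linf_loc g \<and> weak_pd2 u i j g" for i j
    using locally_bounded_imp_Linf_loc[OF hessian_measurable hessian_entry_locally_bounded] weak_hessian
    unfolding weak_hessian_def by blast
qed

lemma integral_weak_hessian_form:
  assumes "weak_hessian u H'" "test_fun \<phi>"
  shows "integrable lebesgue (\<lambda>x. v \<bullet> (H' x *v v) * \<phi> x)"
    "(\<integral>x. v \<bullet> (H' x *v v) * \<phi> x \<partial>lebesgue) = (\<integral>x. v \<bullet> (H x *v v) * \<phi> x \<partial>lebesgue)"
proof -
  have H': "weak_pd2 u i j (\<lambda>x. H' x $ i $ j)" for i j using assms(1) unfolding weak_hessian_def by blast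
  have int_H': "integrable lebesgue (\<lambda>x. H' x $ i $ j * \<phi> x)" for i j
    using H'[of i j] integrable_mult_test_fun[OF _ assms(2)] unfolding weak_pd2_def by blast
  have int_H: "integrable lebesgue (\<lambda>x. H x $ i $ j * \<phi> x)" for i j
    using integrable_mult_test_fun[OF loc_integrable_hessian_entry assms(2)] .
  have "(\<integral>x. H' x $ i $ j * \<phi> x \<partial>lebesgue) = (\<integral>x. H x $ i $ j * \<phi> x \<partial>lebesgue)" for i j
  proof -
    have "(\<integral>x. u x * pd i (pd j \<phi>) x \<partial>lebesgue) = (\<integral>x. H' x $ i $ j * \<phi> x \<partial>lebesgue)"
      using H'[of i j] assms(2) unfolding weak_pd2_def by blast
    then show ?thesis using integral_u_pd_pd[OF assms(2)] by simp
  qed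
  then show "(\<integral>x. v \<bullet> (H' x *v v) * \<phi> x \<partial>lebesgue) = (\<integral>x. v \<bullet> (H x *v v) * \<phi> x \<partial>lebesgue)"
    by (simp add: integral_quadratic_form(2)[OF int_H'] integral_quadratic_form(2)[OF int_H])
  show "integrable lebesgue (\<lambda>x. v \<bullet> (H' x *v v) * \<phi> x)" by (rule integral_quadratic_form(1)[OF int_H'])
qed

text \<open>Testing against a bump function concentrated where \<open>v \<bullet> H v > \<bar>v\<bar>\<^sup>2\<close> shows that no weak
  Hessian can be bounded by the identity.\<close>
lemma no_weak_hessian_bounded_by_Id:
  assumes continuous: "isCont (\<lambda>x. v \<bullet> (H x *v v)) x0"
    and exceeds: "v \<bullet> (H x0 *v v) > norm v ^ 2"
  shows "\<not> (\<exists>H'. weak_hessian u H' \<and> (AE x in lebesgue. \<forall>v. \<bar>v \<bullet> (H' x *v v)\<bar> \<le> norm v ^ 2))"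
proof
  assume "\<exists>H'. weak_hessian u H' \<and> (AE x in lebesgue. \<forall>v. \<bar>v \<bullet> (H' x *v v)\<bar> \<le> norm v ^ 2)"
  then obtain H' where H': "weak_hessian u H'" and bound: "AE x in lebesgue. \<forall>v. \<bar>v \<bullet> (H' x *v v)\<bar> \<le> norm v ^ 2"
    by blast
  define \<epsilon> where "\<epsilon> = (v \<bullet> (H x0 *v v) - norm v ^ 2) / 2"
  have \<epsilon>: "\<epsilon> > 0" using exceeds by (simp add: \<epsilon>_def)
  obtain \<delta> where \<delta>: "\<delta> > 0" "\<And>x. dist x x0 < \<delta> \<Longrightarrow> dist (v \<bullet> (H x *v v)) (v \<bullet> (H x0 *v v)) < \<epsilon>"
    using continuous \<epsilon> unfolding continuous_at_eps_delta by blast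
  obtain \<phi> where \<phi>: "test_fun \<phi>" "\<And>x. \<phi> x \<ge> 0" "\<phi> x0 > 0" "\<And>x. \<phi> x \<noteq> 0 \<Longrightarrow> dist x x0 < \<delta>"
    using bump_test_fun_exists[OF \<delta>(1), of x0] by blast
  have "loc_integrable (\<lambda>x::real^'n. 1)"
    by (rule locally_bounded_imp_loc_integrable) (auto intro: bounded_imp_locally_bounded)
  from integrable_mult_test_fun[OF this \<phi>(1)] have int_\<phi>: "integrable lebesgue \<phi>" by simp
  have "(\<integral>x. v \<bullet> (H x *v v) * \<phi> x \<partial>lebesgue) = (\<integral>x. v \<bullet> (H' x *v v) * \<phi> x \<partial>lebesgue)"
    using integral_weak_hessian_form(2)[OF H' \<phi>(1)] by simp
  also have "\<dots> \<le> (\<integral>x. norm v ^ 2 * \<phi> x \<partial>lebesgue)"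
  proof (rule integral_mono_AE)
    show "integrable lebesgue (\<lambda>x. v \<bullet> (H' x *v v) * \<phi> x)"
      by (rule integral_weak_hessian_form(1)[OF H' \<phi>(1)])
    show "integrable lebesgue (\<lambda>x. norm v ^ 2 * \<phi> x)" using int_\<phi> by simp
    show "AE x in lebesgue. v \<bullet> (H' x *v v) * \<phi> x \<le> norm v ^ 2 * \<phi> x"
      using bound
    proof eventually_elim
      case (elim x)
      then have "v \<bullet> (H' x *v v) \<le> norm v ^ 2" by (simp add: abs_le_iff)
      then show ?case using \<phi>(2)[of x] by (rule mult_right_mono)
    qed
  qed
  finally have upper: "(\<integral>x. v \<bullet> (H x *v v) * \<phi> x \<partial>lebesgue) \<le> norm v ^ 2 * (\<integral>x. \<phi> x \<partial>lebesgue)" by simp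
  have "(norm v ^ 2 + \<epsilon>) * \<phi> x \<le> v \<bullet> (H x *v v) * \<phi> x" for x
  proof (cases "\<phi> x = 0")
    case False
    then have "dist (v \<bullet> (H x *v v)) (v \<bullet> (H x0 *v v)) < \<epsilon>" using \<delta>(2) \<phi>(4) by blast
    then have "v \<bullet> (H x0 *v v) - v \<bullet> (H x *v v) < \<epsilon>"
      using abs_ge_minus_self[of "v \<bullet> (H x *v v) - v \<bullet> (H x0 *v v)"] unfolding dist_real_def by linarith
    then have "norm v ^ 2 + \<epsilon> \<le> v \<bullet> (H x *v v)" unfolding \<epsilon>_def by (simp add: field_simps)
    then show ?thesis using \<phi>(2)[of x] by (rule mult_right_mono)
  qed simp
  then have "(\<integral>x. (norm v ^ 2 + \<epsilon>) * \<phi> x \<partial>lebesgue) \<le> (\<integral>x. v \<bullet> (H x *v v) * \<phi> x \<partial>lebesgue)"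
    using int_\<phi> integral_weak_hessian_form(1)[OF weak_hessian \<phi>(1)] by (intro integral_mono) auto
  then have "(norm v ^ 2 + \<epsilon>) * (\<integral>x. \<phi> x \<partial>lebesgue) \<le> norm v ^ 2 * (\<integral>x. \<phi> x \<partial>lebesgue)"
    using upper by (simp only: integral_mult_right_zero)
  moreover have "(\<integral>x. \<phi> x \<partial>lebesgue) > 0"
    using integral_pos_if_continuous_nonneg[OF test_funD(1)[OF \<phi>(1)] \<phi>(2,3) int_\<phi>] .
  ultimately show False using \<epsilon> by (simp add: distrib_right mult_le_0_iff)
qed

lemma Ck2_imp_continuous_hessian_form:
  assumes "Ck 2 u"
  obtains Q where "continuous_on UNIV Q" "\<And>x. x \<notin> N \<Longrightarrow> Q x = v \<bullet> (H x *v v)"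
proof
  have "Ck (Suc (Suc 0)) u" using assms by (simp add: numeral_2_eq_2)
  then have "continuous_on UNIV (pd j (\<lambda>x. G x $ i))" for i j by (simp add: pd_eq_gradient)
  then show "continuous_on UNIV (\<lambda>x. \<Sum>i\<in>UNIV. \<Sum>j\<in>UNIV. v$i * v$j * pd j (\<lambda>x. G x $ i) x)"
    by (intro continuous_on_sum continuous_on_mult continuous_on_const)
  show "(\<Sum>i\<in>UNIV. \<Sum>j\<in>UNIV. v$i * v$j * pd j (\<lambda>x. G x $ i) x) = v \<bullet> (H x *v v)" if "x \<notin> N" for x
    by (simp add: inner_matrix_vector_mult_eq_sum pd_gradient_eq_hessian[OF that])
qed

end
section \<open>The angular profile\<close>

lemma has_real_derivative_glue:
  fixes f p q :: "real \<Rightarrow> real"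
  assumes p: "(p has_real_derivative d) (at c)" and q: "(q has_real_derivative d) (at c)"
    and left: "\<And>s. s \<le> c \<Longrightarrow> f s = p s" and right: "\<And>s. s \<ge> c \<Longrightarrow> f s = q s"
  shows "(f has_real_derivative d) (at c)"
proof -
  have "((\<lambda>h. (f (c + h) - f c) / h) \<longlongrightarrow> d) (at 0)"
  proof (rule filterlim_split_at)
    have "\<forall>\<^sub>F h in at_left (0::real). (p (c + h) - p c) / h = (f (c + h) - f c) / h"
      unfolding eventually_at_left_field using left by (intro exI[of _ "-1"]) auto
    with p show "((\<lambda>h. (f (c + h) - f c) / h) \<longlongrightarrow> d) (at_left 0)"
      unfolding DERIV_def filterlim_at_split by (blast intro: Lim_transform_eventually)
    have "\<forall>\<^sub>F h in at_right (0::real). (q (c + h) - q c) / h = (f (c + h) - f c) / h"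
      unfolding eventually_at_right_field using right by (intro exI[of _ 1]) auto
    with q show "((\<lambda>h. (f (c + h) - f c) / h) \<longlongrightarrow> d) (at_right 0)"
      unfolding DERIV_def filterlim_at_split by (blast intro: Lim_transform_eventually)
  qed
  then show ?thesis by (simp add: DERIV_def)
qed

lemma eventually_if_less_eq:
  fixes c t :: real
  shows "t < c \<Longrightarrow> \<forall>\<^sub>F s in nhds t. (if s < c then g s else h s) = g s"
    and "t > c \<Longrightarrow> \<forall>\<^sub>F s in nhds t. (if s < c then g s else h s) = h s"
  using eventually_nhds_in_open[of "{..<c}" t] eventually_nhds_in_open[of "{c<..}" t]
  by (auto elim!: eventually_mono)

lemma has_real_derivative_if_less:
  fixes g h :: "real \<Rightarrow> real"
  assumes "(g has_real_derivative d1) (at t)" "(h has_real_derivative d2) (at t)"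
    and "t = c \<Longrightarrow> g c = h c \<and> d1 = d2"
  shows "((\<lambda>s. if s < c then g s else h s) has_real_derivative (if t < c then d1 else d2)) (at t)"
proof -
  consider "t < c" | "t > c" | "t = c" by linarith
  then show ?thesis
  proof cases
    case 1
    then show ?thesis using DERIV_cong_ev[OF refl eventually_if_less_eq(1)[OF 1, of g h] refl] assms(1)
      by simp
  next
    case 2
    then show ?thesis using DERIV_cong_ev[OF refl eventually_if_less_eq(2)[OF 2, of g h] refl] assms(2)
      by simp
  next
    case 3
    with assms(3) have "g c = h c" "d1 = d2" by auto
    have "((\<lambda>s. if s < c then g s else h s) has_real_derivative d2) (at c)"
      by (rule has_real_derivative_glue[OF assms(1)[unfolded 3 \<open>d1 = d2\<close>] assms(2)[unfolded 3]])
        (use \<open>g c = h c\<close> in auto)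
    then show ?thesis using 3 by simp
  qed
qed

lemma isCont_if_less:
  fixes g h :: "real \<Rightarrow> real"
  assumes "isCont g t" "isCont h t" and "t = c \<Longrightarrow> g c = h c"
  shows "isCont (\<lambda>s. if s < c then g s else h s) t"
proof -
  consider "t < c" | "t > c" | "t = c" by linarith
  then show ?thesis
  proof cases
    case 1
    then show ?thesis using isCont_cong[OF eventually_if_less_eq(1)[OF 1, of g h]] assms(1) by simp
  next
    case 2
    then show ?thesis using isCont_cong[OF eventually_if_less_eq(2)[OF 2, of g h]] assms(2) by simp
  next
    case 3
    have "(g \<longlongrightarrow> h c) (at_left c)" "(h \<longlongrightarrow> h c) (at_right c)"
      using assms 3 by (auto simp: isCont_def intro: tendsto_mono[OF at_le])
    moreover have "\<forall>\<^sub>F s in at_left c. g s = (if s < c then g s else h s)"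
      "\<forall>\<^sub>F s in at_right c. h s = (if s < c then g s else h s)"
      by (auto simp: eventually_at_left_field eventually_at_right_field intro: exI[of _ "c - 1"] exI[of _ "c + 1"])
    ultimately have "((\<lambda>s. if s < c then g s else h s) \<longlongrightarrow> h c) (at_left c)"
      "((\<lambda>s. if s < c then g s else h s) \<longlongrightarrow> h c) (at_right c)"
      by (blast intro: Lim_transform_eventually)+
    then show ?thesis using 3 by (simp add: isCont_def filterlim_split_at)
  qed
qed

text \<open>The profile \<open>h\<close> of the paper on one period: \<open>prof\<close> is \<open>h\<close> on \<open>[0, 2\<pi>)\<close>, to be composed with
  \<open>Arg2pi\<close>, and \<open>prof0\<close> is \<open>h\<close> on \<open>(-\<pi>, \<pi>)\<close>, to be composed with \<open>Arg\<close> near the positive real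
  axis, where \<open>Arg2pi\<close> jumps. The two branches meet at the angle \<open>kink\<close>.\<close>
locale profile =
  fixes \<alpha> :: real
  assumes alpha_gt: "\<alpha> > 1/2"
begin

abbreviation \<beta> :: real where "\<beta> \<equiv> beta_of \<alpha>"

definition kink :: real where "kink = pi / (2 * \<alpha>)"

definition prof :: "real \<Rightarrow> real" where
  "prof t = (if t < kink then cos (2 * \<alpha> * t) else cos (2 * \<beta> * (2 * pi - t)))"
definition prof' :: "real \<Rightarrow> real" where
  "prof' t = (if t < kink then - (2 * \<alpha>) * sin (2 * \<alpha> * t) else 2 * \<beta> * sin (2 * \<beta> * (2 * pi - t)))"
definition prof'' :: "real \<Rightarrow> real" where
  "prof'' t =
  (if t < kink then - (4 * \<alpha>\<^sup>2) * cos (2 * \<alpha> * t) else - (4 * \<beta>\<^sup>2) * cos (2 * \<beta> * (2 * pi - t)))"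
definition prof0 :: "real \<Rightarrow> real" where
  "prof0 t = (if t < 0 then cos (2 * \<beta> * t) else cos (2 * \<alpha> * t))"
definition prof0' :: "real \<Rightarrow> real" where
  "prof0' t = (if t < 0 then - (2 * \<beta>) * sin (2 * \<beta> * t) else - (2 * \<alpha>) * sin (2 * \<alpha> * t))"

lemma alpha_pos: "\<alpha> > 0" using alpha_gt by simp
lemma kink_pos: "kink > 0" using alpha_gt by (simp add: kink_def)
lemma kink_less_pi: "kink < pi" using alpha_gt pi_gt_zero by (simp add: kink_def divide_less_eq)
lemma alpha_kink: "2 * \<alpha> * kink = pi" using alpha_pos by (simp add: kink_def)
lemma beta_pos: "\<beta> > 0" using alpha_gt by (simp add: beta_of_def)
lemma beta_less: "\<beta> < 1/2" using alpha_gt by (simp add: beta_of_def divide_less_eq)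
lemma beta_kink: "2 * \<beta> * (2 * pi - kink) = pi"
proof -
  have "4 * \<alpha> - 1 > 0" using alpha_gt by simp
  then show ?thesis using alpha_pos by (simp add: beta_of_def kink_def field_simps)
qed

lemma prof_has_real_derivative: "(prof has_real_derivative prof' t) (at t)"
  unfolding prof_def[abs_def] prof'_def
  by (rule has_real_derivative_if_less) (auto intro!: derivative_eq_intros simp: alpha_kink beta_kink)

lemma prof'_has_real_derivative: "t \<noteq> kink \<Longrightarrow> (prof' has_real_derivative prof'' t) (at t)"
  unfolding prof'_def[abs_def] prof''_def
  by (rule has_real_derivative_if_less) (auto intro!: derivative_eq_intros simp: power2_eq_square)

lemma prof0_has_real_derivative: "(prof0 has_real_derivative prof0' t) (at t)"
  unfolding prof0_def[abs_def] prof0'_def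
  by (rule has_real_derivative_if_less) (auto intro!: derivative_eq_intros)

lemma isCont_prof: "isCont prof t"
  using prof_has_real_derivative DERIV_isCont by blast

lemma isCont_prof': "isCont prof' t"
  unfolding prof'_def[abs_def]
  by (rule isCont_if_less) (auto intro!: continuous_intros simp: alpha_kink beta_kink)

lemma isCont_prof'': "t \<noteq> kink \<Longrightarrow> isCont prof'' t"
  unfolding prof''_def[abs_def] by (rule isCont_if_less) (auto intro!: continuous_intros)

lemma isCont_prof0: "isCont prof0 t"
  using prof0_has_real_derivative DERIV_isCont by blast

lemma isCont_prof0': "isCont prof0' t"
  unfolding prof0'_def[abs_def] by (rule isCont_if_less) (auto intro!: continuous_intros)

lemma prof0_eq_prof:
  assumes "0 \<le> t" "t < kink"
  shows "prof0 t = prof t" "prof0' t = prof' t"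
  using assms by (auto simp: prof0_def prof_def prof0'_def prof'_def)

lemma prof0_eq_prof_shift:
  assumes "- pi < t" "t < 0"
  shows "prof0 t = prof (t + 2 * pi)" "prof0' t = prof' (t + 2 * pi)"
proof -
  have "\<not> t + 2 * pi < kink" using assms kink_less_pi by linarith
  moreover have "2 * \<beta> * (2 * pi - (t + 2 * pi)) = - (2 * \<beta> * t)" by (simp add: algebra_simps)
  ultimately show "prof0 t = prof (t + 2 * pi)" "prof0' t = prof' (t + 2 * pi)"
    using assms by (simp_all add: prof0_def prof_def prof0'_def prof'_def)
qed

lemma prof_h_eq_prof:
  assumes "0 \<le> t" "t < 2 * pi"
  shows "prof_h \<alpha> \<beta> t = prof t"
proof -
  have "\<lfloor>t / (2 * pi)\<rfloor> = 0" using assms by (simp add: floor_eq_iff divide_less_eq)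
  then show ?thesis by (simp add: prof_h_def prof_def kink_def Let_def)
qed

lemma abs_prof_le: "\<bar>prof t\<bar> \<le> 1"
  by (simp add: prof_def)

lemma abs_prof'_le: "\<bar>prof' t\<bar> \<le> 2 * \<alpha>"
proof -
  have "\<bar>2 * \<alpha> * sin x\<bar> \<le> 2 * \<alpha>" "\<bar>2 * \<beta> * sin x\<bar> \<le> 2 * \<alpha>" for x
    using alpha_pos beta_pos beta_less alpha_gt abs_sin_le_one[of x]
    by (auto simp: abs_mult intro!: mult_le_one order_trans[OF mult_right_le_one_le])
  then show ?thesis by (auto simp: prof'_def)
qed

lemma abs_prof''_le: "\<bar>prof'' t\<bar> \<le> 4 * \<alpha>\<^sup>2"
proof -
  have "\<beta>\<^sup>2 \<le> \<alpha>\<^sup>2" using beta_pos beta_less alpha_gt by (intro power_mono) auto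
  then have "\<bar>4 * \<alpha>\<^sup>2 * cos x\<bar> \<le> 4 * \<alpha>\<^sup>2" "\<bar>4 * \<beta>\<^sup>2 * cos x\<bar> \<le> 4 * \<alpha>\<^sup>2" for x
    using abs_cos_le_one[of x] by (auto simp: abs_mult intro: order_trans[OF mult_left_le])
  then show ?thesis by (auto simp: prof''_def)
qed

end

section \<open>The model function in the complex plane\<close>

lemma Arg_eq_Arg2pi:
  assumes "Im z \<ge> 0"
  shows "Arg z = Arg2pi z"
proof (cases "z = 0")
  case False
  have "0 \<le> Arg z" using assms by (simp add: Arg_less_0)
  moreover have "Arg z < 2 * pi" using Arg_le_pi[of z] pi_gt_zero by linarith
  ultimately show ?thesis
    using Arg_eq[OF False] False by (intro Arg2pi_unique[of "norm z", symmetric]) auto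
qed (simp add: Arg_zero)

lemma Arg2pi_eq_Arg_plus_2pi:
  assumes "Im z < 0"
  shows "Arg2pi z = Arg z + 2 * pi"
proof -
  have z: "z \<noteq> 0" using assms by auto
  have "exp (\<i> * complex_of_real (Arg z + 2 * pi)) = exp (\<i> * complex_of_real (Arg z))"
    by (simp add: distrib_left exp_add exp_two_pi_i'[unfolded mult.commute[of "complex_of_real pi"]])
  moreover have "Arg z < 0" using assms by (simp add: Arg_neg_iff)
  ultimately show ?thesis
    using Arg_eq[OF z] mpi_less_Arg[of z] z by (intro Arg2pi_unique[of "norm z"]) auto
qed

lemma Arg_has_derivative: "z \<notin> \<real>\<^sub>\<le>\<^sub>0 \<Longrightarrow> (Arg has_derivative (\<lambda>w. Im (w / z))) (at z)"
proof -
  assume z: "z \<notin> \<real>\<^sub>\<le>\<^sub>0"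
  then have z0: "z \<noteq> 0" by auto
  have "(Ln has_derivative (\<lambda>w. inverse z * w)) (at z)"
    using has_field_derivative_Ln[OF z] by (simp add: has_field_derivative_def)
  then have d: "((\<lambda>w. Im (Ln w)) has_derivative (\<lambda>w. Im (inverse z * w))) (at z)"
    by (rule bounded_linear.has_derivative[OF bounded_linear_Im])
  have "(\<lambda>w. Im (inverse z * w)) = (\<lambda>w. Im (w / z))" by (auto simp: divide_inverse mult.commute)
  with d have d: "((\<lambda>w. Im (Ln w)) has_derivative (\<lambda>w. Im (w / z))) (at z)" by simp
  have o: "open (- (\<real>\<^sub>\<le>\<^sub>0 :: complex set))" by auto
  show ?thesis
    by (rule has_derivative_transform_within_open[OF d o])
      (use z nonpos_Reals_zero_I[where 'a=complex] in \<open>auto, metis Arg_eq_Im_Ln\<close>)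
qed

lemma Arg2pi_has_derivative: "z \<notin> \<real>\<^sub>\<ge>\<^sub>0 \<Longrightarrow> (Arg2pi has_derivative (\<lambda>w. Im (w / z))) (at z)"
proof -
  assume z: "z \<notin> \<real>\<^sub>\<ge>\<^sub>0"
  then have mz: "- z \<notin> \<real>\<^sub>\<le>\<^sub>0" by (simp add: complex_nonneg_Reals_iff complex_nonpos_Reals_iff)
  have l: "(Ln has_derivative (*) (inverse (- z))) (at (- z))"
    using has_field_derivative_Ln[OF mz] unfolding has_field_derivative_def .
  have n: "(uminus has_derivative uminus) (at z)" by (auto intro!: derivative_eq_intros)
  have "((\<lambda>w. Ln (- w)) has_derivative (\<lambda>w. inverse (- z) * (- w))) (at z)"
    using has_derivative_compose[OF n l] .
  then have d: "((\<lambda>w. Im (Ln (- w)) + pi) has_derivative (\<lambda>w. Im (inverse (- z) * (- w)) + 0)) (at z)"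
    by (intro has_derivative_add has_derivative_const bounded_linear.has_derivative[OF bounded_linear_Im])
  have "(\<lambda>w. Im (inverse (- z) * (- w)) + 0) = (\<lambda>w. Im (w / z))" by (auto simp: divide_inverse mult.commute)
  with d have d: "((\<lambda>w. Im (Ln (- w)) + pi) has_derivative (\<lambda>w. Im (w / z))) (at z)" by simp
  have o: "open (- (\<real>\<^sub>\<ge>\<^sub>0 :: complex set))" by auto
  have eq: "Arg2pi w = Im (Ln (- w)) + pi" if "w \<notin> \<real>\<^sub>\<ge>\<^sub>0" for w
  proof -
    have "Arg2pi w \<noteq> 0" using that by (auto simp: Arg2pi_eq_0 complex_nonneg_Reals_iff complex_is_Real_iff)
    then have "0 < Arg2pi w" using Arg2pi[of w] by linarith
    then show ?thesis by (rule Arg2pi_Ln)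
  qed
  show ?thesis by (rule has_derivative_transform_within_open[OF d o]) (use z eq in auto)
qed

lemma Im_divide_mult_cmod_square: "z \<noteq> 0 \<Longrightarrow> Im (w / z) * (cmod z)^2 = Re z * Im w - Im z * Re w"
proof -
  assume z: "z \<noteq> 0"
  have nz: "(Re z)^2 + (Im z)^2 \<noteq> 0" using z by (simp add: complex_eq_iff)
  have "Im (w / z) = (Re z * Im w - Im z * Re w) / ((Re z)^2 + (Im z)^2)" by (simp add: Im_divide)
  then show ?thesis using nz by (simp add: cmod_power2)
qed

lemma inner_ii_mult_left: "(\<i> * z) \<bullet> w = Re z * Im w - Im z * Re w"
  by (simp add: inner_complex_def)

lemma polar_function_has_derivative:
  fixes \<theta> f f' :: "_ \<Rightarrow> real"
  assumes th: "(\<theta> has_derivative (\<lambda>w. Im (w / z))) (at z)"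
    and f: "(f has_real_derivative f' (\<theta> z)) (at (\<theta> z))" and z: "z \<noteq> 0"
  shows "((\<lambda>z. 1/2 * f (\<theta> z) * (cmod z)^2) has_derivative
     (\<lambda>w. (of_real (f (\<theta> z)) * z + of_real (f' (\<theta> z) / 2) * (\<i> * z)) \<bullet> w)) (at z)"
proof -
  have f': "(f has_derivative (\<lambda>h. f' (\<theta> z) * h)) (at (\<theta> z))"
    using f by (simp add: has_field_derivative_def)
  have c: "((\<lambda>z. f (\<theta> z)) has_derivative (\<lambda>w. f' (\<theta> z) * Im (w / z))) (at z)"
    using has_derivative_compose[OF th f'] .
  have n: "((\<lambda>z::complex. (cmod z)^2) has_derivative (\<lambda>w. 2 * (z \<bullet> w))) (at z)"
  proof -
    have "((\<lambda>z::complex. z \<bullet> z) has_derivative (\<lambda>w. z \<bullet> w + w \<bullet> z)) (at z)"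
      by (rule has_derivative_inner[OF has_derivative_ident has_derivative_ident])
    then show ?thesis by (simp add: power2_norm_eq_inner inner_commute)
  qed
  have "((\<lambda>z. 1/2 * f (\<theta> z) * (cmod z)^2) has_derivative
      (\<lambda>w. 1/2 * f (\<theta> z) * (2 * (z \<bullet> w)) + 1/2 * (f' (\<theta> z) * Im (w / z)) * (cmod z)^2)) (at z)"
    using has_derivative_mult[OF has_derivative_mult_right[OF c, of "1/2"] n] by (simp add: algebra_simps)
  moreover have "(\<lambda>w. 1/2 * f (\<theta> z) * (2 * (z \<bullet> w)) + 1/2 * (f' (\<theta> z) * Im (w / z)) * (cmod z)^2)
     = (\<lambda>w. (of_real (f (\<theta> z)) * z + of_real (f' (\<theta> z) / 2) * (\<i> * z)) \<bullet> w)"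
  proof
    fix w
    have "1/2 * f (\<theta> z) * (2 * (z \<bullet> w)) + 1/2 * (f' (\<theta> z) * Im (w / z)) * (cmod z)^2
       = f (\<theta> z) * (z \<bullet> w) + 1/2 * f' (\<theta> z) * (Im (w / z) * (cmod z)^2)" by simp
    also have "\<dots> = f (\<theta> z) * (z \<bullet> w) + 1/2 * f' (\<theta> z) * (Re z * Im w - Im z * Re w)"
      using Im_divide_mult_cmod_square[OF z] by simp
    also have "\<dots> = (of_real (f (\<theta> z)) * z + of_real (f' (\<theta> z) / 2) * (\<i> * z)) \<bullet> w"
      by (simp add: inner_complex_def algebra_simps)
    finally show "1/2 * f (\<theta> z) * (2 * (z \<bullet> w)) + 1/2 * (f' (\<theta> z) * Im (w / z)) * (cmod z)^2
      = (of_real (f (\<theta> z)) * z + of_real (f' (\<theta> z) / 2) * (\<i> * z)) \<bullet> w" .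
  qed
  ultimately show ?thesis by simp
qed

lemma polar_gradient_has_derivative:
  fixes \<theta> f g gg :: "_ \<Rightarrow> real"
  assumes th: "(\<theta> has_derivative (\<lambda>w. Im (w / z))) (at z)"
    and f: "(f has_real_derivative g (\<theta> z)) (at (\<theta> z))"
    and g: "(g has_real_derivative gg (\<theta> z)) (at (\<theta> z))"
  shows "((\<lambda>z. of_real (f (\<theta> z)) * z + of_real (g (\<theta> z) / 2) * (\<i> * z)) has_derivative
     (\<lambda>w. of_real (f (\<theta> z)) * w + of_real (g (\<theta> z) / 2) * (\<i> * w)
        + of_real (Im (w / z)) * (of_real (g (\<theta> z)) * z + of_real (gg (\<theta> z) / 2) * (\<i> * z)))) (at z)"
proof -
  have cf: "((\<lambda>z. complex_of_real (f (\<theta> z))) has_derivative (\<lambda>w. of_real (g (\<theta> z) * Im (w / z)))) (at z)"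
    using has_derivative_compose[OF th f[unfolded has_field_derivative_def]]
    by (rule bounded_linear.has_derivative[OF bounded_linear_of_real])
  have cg: "((\<lambda>z. complex_of_real (g (\<theta> z) / 2)) has_derivative (\<lambda>w. of_real (gg (\<theta> z) * Im (w / z) / 2))) (at z)"
  proof -
    have "((\<lambda>z. g (\<theta> z) / 2) has_derivative (\<lambda>w. gg (\<theta> z) * Im (w / z) / 2)) (at z)"
      using has_derivative_divide'[OF has_derivative_compose[OF th g[unfolded
          has_field_derivative_def]] has_derivative_const, of 2]
      by simp
    then show ?thesis by (rule bounded_linear.has_derivative[OF bounded_linear_of_real])
  qed
  have iz: "((\<lambda>z. \<i> * z) has_derivative (\<lambda>w. \<i> * w)) (at z)"
    by (rule has_derivative_mult_right[OF has_derivative_ident])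
  have "((\<lambda>z. of_real (f (\<theta> z)) * z + of_real (g (\<theta> z) / 2) * (\<i> * z)) has_derivative
     (\<lambda>w. (of_real (f (\<theta> z)) * w + of_real (g (\<theta> z) * Im (w / z)) * z) +
          (of_real (g (\<theta> z) / 2) * (\<i> * w) + of_real (gg (\<theta> z) * Im (w / z) / 2) * (\<i> * z)))) (at z)"
    by (rule has_derivative_add[OF has_derivative_mult[OF cf has_derivative_ident] has_derivative_mult[OF cg iz]])
  then show ?thesis by (simp add: algebra_simps)
qed

lemma inner_of_real_mult_right: "w \<bullet> (complex_of_real c * x) = c * (w \<bullet> x)"
  by (simp add: inner_complex_def algebra_simps)

lemma inner_ii_mult_self: "w \<bullet> (\<i> * w) = 0"
  by (simp add: inner_complex_def algebra_simps)

lemma Im_divide_eq_inner: "z \<noteq> 0 \<Longrightarrow> Im (w / z) = ((\<i> * z) \<bullet> w) / (cmod z)^2"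
  using Im_divide_mult_cmod_square[of z w] by (simp add: inner_ii_mult_left field_simps)

lemma inner_square_add_inner_ii_square: "(z \<bullet> w)^2 + ((\<i> * z) \<bullet> w)^2 = (cmod z)^2 * (cmod w)^2"
  unfolding cmod_power2 by (simp add: inner_complex_def power2_eq_square algebra_simps)

lemma inner_divide_2_right: "w \<bullet> (x / 2) = (w \<bullet> x) / (2::real)" for x :: complex
  by (simp add: inner_complex_def)

lemma polar_hessian_form_bound:
  fixes C S g a b :: real
  assumes cs: "C^2 + S^2 = 1" and g: "0 \<le> g" "g \<le> 1"
  shows "\<bar>C * (a^2 + b^2) - 2 * g * S * a * b - 2 * g^2 * C * b^2\<bar> \<le> a^2 + b^2"
proof -
  let ?Q = "C * (a^2 + b^2) - 2 * g * S * a * b - 2 * g^2 * C * b^2"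
  have "C^2 \<le> 1" using cs by (metis le_add_same_cancel1 zero_le_power2)
  then have "\<bar>C\<bar> \<le> 1" by (simp add: abs_square_le_1)
  then have C1: "C \<le> 1" "C \<ge> -1" by linarith+
  have g2: "1 - g^2 \<ge> 0" using g by (simp add: power_le_one)
  \<comment> \<open>multiplied by \<open>1 - C\<close> resp. \<open>1 + C\<close>, the two gaps become sums of squares\<close>
  have id1: "(1 - C) * ((a^2 + b^2) - ?Q) = ((1 - C) * a + g * S * b)^2 + (1 - C)^2 * (1 - g^2) * b^2"
    using cs by algebra
  have id2: "(1 + C) * ((a^2 + b^2) + ?Q) = ((1 + C) * a - g * S * b)^2 + (1 + C)^2 * (1 - g^2) * b^2"
    using cs by algebra
  have p1: "(a^2 + b^2) - ?Q \<ge> 0"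
  proof (cases "C = 1")
    case True
    then have "S = 0" using cs by simp
    then show ?thesis using True g by simp
  next
    case False
    then have "1 - C > 0" using C1 by simp
    moreover have "(1 - C) * ((a^2 + b^2) - ?Q) \<ge> 0" unfolding id1 using g2 by simp
    ultimately show ?thesis by (simp add: zero_le_mult_iff)
  qed
  have p2: "(a^2 + b^2) + ?Q \<ge> 0"
  proof (cases "C = -1")
    case True
    then have "S = 0" using cs by simp
    then show ?thesis using True g by simp
  next
    case False
    then have "1 + C > 0" using C1 by simp
    moreover have "(1 + C) * ((a^2 + b^2) + ?Q) \<ge> 0" unfolding id2 using g2 by simp
    ultimately show ?thesis by (simp add: zero_le_mult_iff)
  qed
  show ?thesis using p1 p2 by linarith
qed

lemma norm_rotation_combination_le:
  "cmod (of_real a * w + of_real b * (\<i> * w)) \<le> (\<bar>a\<bar> + \<bar>b\<bar>) * cmod w"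
  using norm_triangle_ineq[of "of_real a * w" "of_real b * (\<i> * w)"] by (simp add: norm_mult algebra_simps)

lemma abs_Im_divide_mult_cmod_le: "\<bar>Im (w / z)\<bar> * cmod z \<le> cmod w"
proof (cases "z = 0")
  case False
  then show ?thesis using abs_Im_le_cmod[of "w / z"] by (simp add: norm_divide le_divide_eq)
qed simp

context profile
begin

definition U :: "complex \<Rightarrow> real" where
  "U z = 1/2 * prof (Arg2pi z) * (cmod z)^2"
definition gradU :: "complex \<Rightarrow> complex" where
  "gradU z = of_real (prof (Arg2pi z)) * z + of_real (prof' (Arg2pi z) / 2) * (\<i> * z)"
definition hessU :: "complex \<Rightarrow> complex \<Rightarrow> complex" where
  "hessU z w = of_real (prof (Arg2pi z)) * w + of_real (prof' (Arg2pi z) / 2) * (\<i> * w)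
        + of_real (Im (w / z)) * (of_real (prof' (Arg2pi z)) * z + of_real (prof'' (Arg2pi z) / 2) * (\<i> * z))"

lemma eventually_prof0_Arg_eq:
  assumes z: "z \<in> \<real>\<^sub>\<ge>\<^sub>0" "z \<noteq> 0"
  shows "\<forall>\<^sub>F w in nhds z. w \<notin> \<real>\<^sub>\<le>\<^sub>0 \<and> prof0 (Arg w) = prof (Arg2pi w) \<and> prof0' (Arg w) = prof' (Arg2pi w)"
proof -
  have zn: "z \<notin> \<real>\<^sub>\<le>\<^sub>0" using z
    by (auto simp: complex_nonneg_Reals_iff complex_nonpos_Reals_iff complex_eq_iff)
  have a0: "Arg z = 0" using z by (auto simp: Arg_eq_0 complex_nonneg_Reals_iff complex_is_Real_iff)
  have "isCont Arg z" using continuous_at_Arg[OF zn] .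
  then have "(Arg \<longlongrightarrow> Arg z) (nhds z)" by (simp add: isCont_def tendsto_at_iff_tendsto_nhds)
  then have e1: "\<forall>\<^sub>F w in nhds z. Arg w < kink" using a0 kink_pos by (auto dest: order_tendstoD)
  have e2: "\<forall>\<^sub>F w in nhds z. w \<notin> \<real>\<^sub>\<le>\<^sub>0"
    using eventually_nhds_in_open[of "- \<real>\<^sub>\<le>\<^sub>0" z] zn closed_nonpos_Reals_complex by (auto simp: open_Compl)
  show ?thesis using e1 e2
  proof eventually_elim
    case (elim w)
    then have w0: "w \<noteq> 0" by auto
    show ?case
    proof (cases "Im w \<ge> 0")
      case True
      then have "Arg w = Arg2pi w" by (rule Arg_eq_Arg2pi)
      moreover have "0 \<le> Arg w" using True by (simp add: Arg_less_0)
      ultimately show ?thesis using elim prof0_eq_prof by auto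
    next
      case False
      then have e: "Arg2pi w = Arg w + 2 * pi" by (intro Arg2pi_eq_Arg_plus_2pi) auto
      have "Arg w < 0" using False by (simp add: Arg_neg_iff)
      then show ?thesis using elim e prof0_eq_prof_shift mpi_less_Arg[of w] by auto
    qed
  qed
qed

lemma U_has_derivative_0: "(U has_derivative (\<lambda>w. 0)) (at 0)"
  unfolding has_derivative_at
proof
  show "bounded_linear (\<lambda>w::complex. 0::real)" by simp
  have "((\<lambda>h. norm (U (0 + h) - U 0 - 0) / norm h) \<longlongrightarrow> 0) (at (0::complex))"
  proof (rule Lim_null_comparison)
    show "\<forall>\<^sub>F h in at 0. norm (norm (U (0 + h) - U 0 - 0) / norm h) \<le> 1/2 * norm h"
    proof (rule always_eventually, intro allI)
      fix h :: complex
      have "\<bar>U h\<bar> \<le> 1/2 * (cmod h)^2"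
        unfolding U_def using abs_prof_le[of "Arg2pi h"] by (auto simp: abs_mult intro!: mult_left_le_one_le)
      then show "norm (norm (U (0 + h) - U 0 - 0) / norm h) \<le> 1/2 * norm h"
        by (cases "h = 0") (auto simp: U_def divide_le_eq power2_eq_square)
    qed
    show "((\<lambda>h::complex. 1/2 * norm h) \<longlongrightarrow> 0) (at 0)" by (auto intro!: tendsto_eq_intros)
  qed
  then show "(\<lambda>h. norm (U (0 + h) - U 0 - 0) / norm h) \<midarrow>0\<rightarrow> 0" by simp
qed

lemma U_has_derivative: "(U has_derivative (\<lambda>w. gradU z \<bullet> w)) (at z)"
proof -
  consider "z \<notin> \<real>\<^sub>\<ge>\<^sub>0" | "z \<in> \<real>\<^sub>\<ge>\<^sub>0" "z \<noteq> 0" | "z = 0" by blast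
  then show ?thesis
  proof cases
    case 1
    then have z0: "z \<noteq> 0" by auto
    show ?thesis unfolding U_def[abs_def] gradU_def
      by (rule polar_function_has_derivative[where f'=prof', OF Arg2pi_has_derivative[OF 1]
          prof_has_real_derivative[of "Arg2pi z"] z0])
  next
    case 2
    have zn: "z \<notin> \<real>\<^sub>\<le>\<^sub>0" using 2
      by (auto simp: complex_nonneg_Reals_iff complex_nonpos_Reals_iff complex_eq_iff)
    have a0: "Arg z = 0" "Arg2pi z = 0" using 2
      by (auto simp: Arg_eq_0 Arg2pi_eq_0 complex_nonneg_Reals_iff complex_is_Real_iff)
    have d: "((\<lambda>z. 1/2 * prof0 (Arg z) * (cmod z)^2) has_derivative
       (\<lambda>w. (of_real (prof0 (Arg z)) * z + of_real (prof0' (Arg z) / 2) * (\<i> * z)) \<bullet> w)) (at z)"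
      by (rule polar_function_has_derivative[where f'=prof0', OF Arg_has_derivative[OF zn]
          prof0_has_real_derivative[of "Arg z"] 2(2)])
    have g: "of_real (prof0 (Arg z)) * z + of_real (prof0' (Arg z) / 2) * (\<i> * z) = gradU z"
      unfolding gradU_def a0 using prof0_eq_prof[of 0] kink_pos by simp
    obtain S where S: "open S" "z \<in> S" "\<And>w. w \<in> S \<Longrightarrow> w \<notin> \<real>\<^sub>\<le>\<^sub>0 \<and> prof0 (Arg w) = prof (Arg2pi w) \<and>
        prof0' (Arg w) = prof' (Arg2pi w)"
      using eventually_prof0_Arg_eq[OF 2] unfolding eventually_nhds by blast
    show ?thesis
      by (rule has_derivative_transform_within_open[OF d[unfolded g] S(1,2)]) (use S(3) in \<open>simp add: U_def\<close>)
  next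
    case 3
    then show ?thesis using U_has_derivative_0 by (simp add: gradU_def)
  qed
qed

lemma norm_gradU_le: "cmod (gradU w) \<le> (1 + \<alpha>) * cmod w"
proof -
  have "\<bar>prof (Arg2pi w)\<bar> + \<bar>prof' (Arg2pi w) / 2\<bar> \<le> 1 + \<alpha>"
    using abs_prof_le[of "Arg2pi w"] abs_prof'_le[of "Arg2pi w"] by simp
  then show ?thesis
    unfolding gradU_def by (rule order_trans[OF norm_rotation_combination_le mult_right_mono]) simp
qed

lemma isCont_gradU: "isCont gradU z"
proof -
  consider "z \<notin> \<real>\<^sub>\<ge>\<^sub>0" | "z \<in> \<real>\<^sub>\<ge>\<^sub>0" "z \<noteq> 0" | "z = 0" by blast
  then show ?thesis
  proof cases
    case 1
    have a: "isCont Arg2pi z" using continuous_at_Arg2pi[OF 1] .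
    have c1: "isCont (\<lambda>z. prof (Arg2pi z)) z" using isCont_o2[OF a isCont_prof] .
    have c2: "isCont (\<lambda>z. prof' (Arg2pi z)) z" using isCont_o2[OF a isCont_prof'] .
    show ?thesis unfolding gradU_def[abs_def] using c1 c2 by (intro continuous_intros) auto
  next
    case 2
    have zn: "z \<notin> \<real>\<^sub>\<le>\<^sub>0" using 2
      by (auto simp: complex_nonneg_Reals_iff complex_nonpos_Reals_iff complex_eq_iff)
    have a: "isCont Arg z" using continuous_at_Arg[OF zn] .
    have c1: "isCont (\<lambda>z. prof0 (Arg z)) z" using isCont_o2[OF a isCont_prof0] .
    have c2: "isCont (\<lambda>z. prof0' (Arg z)) z" using isCont_o2[OF a isCont_prof0'] .
    have c: "isCont (\<lambda>w. of_real (prof0 (Arg w)) * w + of_real (prof0' (Arg w) / 2) * (\<i> * w)) z"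
      using c1 c2 by (intro continuous_intros) auto
    have ev: "\<forall>\<^sub>F w in nhds z. of_real (prof0 (Arg w)) * w + of_real (prof0' (Arg w) / 2) * (\<i> * w) = gradU w"
      using eventually_prof0_Arg_eq[OF 2] by eventually_elim (simp add: gradU_def)
    show ?thesis using isCont_cong[OF ev] c by blast
  next
    case 3
    have "(gradU \<longlongrightarrow> 0) (at 0)"
    proof (rule Lim_null_comparison)
      show "\<forall>\<^sub>F w in at 0. norm (gradU w) \<le> (1 + \<alpha>) * cmod w" using norm_gradU_le by simp
      show "((\<lambda>w. (1 + \<alpha>) * cmod w) \<longlongrightarrow> 0) (at 0)" by (auto intro!: tendsto_eq_intros)
    qed
    then show ?thesis using 3 by (simp add: isCont_def gradU_def)
  qed
qed

lemma gradU_has_derivative: "z \<notin> \<real>\<^sub>\<ge>\<^sub>0 \<Longrightarrow> Arg2pi z \<noteq> kink \<Longrightarrow> (gradU has_derivative hessU z) (at z)"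
  unfolding gradU_def[abs_def] hessU_def[abs_def]
  by (rule polar_gradient_has_derivative[where g=prof' and gg=prof'', OF Arg2pi_has_derivative
      prof_has_real_derivative[of "Arg2pi z"] prof'_has_real_derivative[of "Arg2pi z"]])

lemma isCont_hessU: "z \<notin> \<real>\<^sub>\<ge>\<^sub>0 \<Longrightarrow> Arg2pi z \<noteq> kink \<Longrightarrow> isCont (\<lambda>z. hessU z w) z"
proof -
  assume z: "z \<notin> \<real>\<^sub>\<ge>\<^sub>0" and zA: "Arg2pi z \<noteq> kink"
  then have z0: "z \<noteq> 0" by auto
  have a: "isCont Arg2pi z" using continuous_at_Arg2pi[OF z] .
  have c1: "isCont (\<lambda>z. prof (Arg2pi z)) z" using isCont_o2[OF a isCont_prof] .
  have c2: "isCont (\<lambda>z. prof' (Arg2pi z)) z" using isCont_o2[OF a isCont_prof'] .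
  have c3: "isCont (\<lambda>z. prof'' (Arg2pi z)) z" using isCont_o2[OF a isCont_prof''[OF zA]] .
  show ?thesis unfolding hessU_def using c1 c2 c3 z0 by (intro continuous_intros) auto
qed

lemma Im_of_real_mult_divide: "Im (of_real r * b / z) = r * Im (b / z)" "Im (b * of_real r / z) = r * Im (b / z)"
  by (simp_all add: Im_divide algebra_simps diff_divide_distrib)

lemma linear_hessU: "linear (hessU z)"
proof (rule linearI)
  show "hessU z (b1 + b2) = hessU z b1 + hessU z b2" for b1 b2
    by (simp add: hessU_def algebra_simps add_divide_distrib)
  show "hessU z (r *\<^sub>R b) = r *\<^sub>R hessU z b" for r b
    by (simp add: hessU_def algebra_simps scaleR_conv_of_real Im_of_real_mult_divide)
qed

lemma norm_hessU_le: "cmod (hessU z w) \<le> (1 + 3 * \<alpha> + 2 * \<alpha>\<^sup>2) * cmod w"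
proof -
  let ?t = "Arg2pi z" and ?c = "2 * \<alpha> + 2 * \<alpha>\<^sup>2"
  have "\<bar>prof ?t\<bar> + \<bar>prof' ?t / 2\<bar> \<le> 1 + \<alpha>"
    using abs_prof_le[of ?t] abs_prof'_le[of ?t] by simp
  then have 1: "cmod (of_real (prof ?t) * w + of_real (prof' ?t / 2) * (\<i> * w)) \<le> (1 + \<alpha>) * cmod w"
    by (rule order_trans[OF norm_rotation_combination_le mult_right_mono]) simp
  have "\<bar>prof' ?t\<bar> + \<bar>prof'' ?t / 2\<bar> \<le> ?c"
    using abs_prof'_le[of ?t] abs_prof''_le[of ?t] by simp
  then have B: "cmod (of_real (prof' ?t) * z + of_real (prof'' ?t / 2) * (\<i> * z)) \<le> ?c * cmod z"
    by (rule order_trans[OF norm_rotation_combination_le mult_right_mono]) simp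
  have "cmod (of_real (Im (w / z)) * (of_real (prof' ?t) * z + of_real (prof'' ?t / 2) * (\<i> * z)))
      \<le> \<bar>Im (w / z)\<bar> * (?c * cmod z)"
    unfolding norm_mult norm_of_real by (rule mult_left_mono[OF B abs_ge_zero])
  also have "\<dots> = ?c * (\<bar>Im (w / z)\<bar> * cmod z)" by (simp only: mult_ac)
  also have "\<dots> \<le> ?c * cmod w"
    using alpha_pos by (intro mult_left_mono[OF abs_Im_divide_mult_cmod_le]) simp
  finally have 2: "cmod (of_real (Im (w / z)) * (of_real (prof' ?t) * z + of_real (prof'' ?t / 2) * (\<i> * z)))
      \<le> ?c * cmod w" .
  have "cmod (hessU z w) \<le> (1 + \<alpha>) * cmod w + ?c * cmod w"
    unfolding hessU_def by (rule norm_triangle_le[OF add_mono[OF 1 2]])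
  then show ?thesis by (simp add: algebra_simps)
qed

lemma inner_hessU:
  assumes z: "z \<noteq> 0"
  shows "w \<bullet> hessU z w = prof (Arg2pi z) * (cmod w)^2
     + prof' (Arg2pi z) * (z \<bullet> w) * ((\<i> * z) \<bullet> w) / (cmod z)^2
     + prof'' (Arg2pi z) / 2 * ((\<i> * z) \<bullet> w)^2 / (cmod z)^2"
proof -
  let ?t = "Arg2pi z"
  have "w \<bullet> hessU z w = prof ?t * (w \<bullet> w) + prof' ?t / 2 * (w \<bullet> (\<i> * w))
     + Im (w / z) * (prof' ?t * (w \<bullet> z) + prof'' ?t / 2 * (w \<bullet> (\<i> * z)))"
    unfolding hessU_def by (simp add: inner_add_right inner_of_real_mult_right inner_divide_2_right)
  also have "\<dots> = prof ?t * (cmod w)^2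
      + ((\<i> * z) \<bullet> w) / (cmod z)^2 * (prof' ?t * (z \<bullet> w) + prof'' ?t / 2 * ((\<i> * z) \<bullet> w))"
    by (simp add: inner_ii_mult_self Im_divide_eq_inner[OF z] power2_norm_eq_inner inner_commute)
  also have "\<dots> = prof ?t * (cmod w)^2
     + prof' ?t * (z \<bullet> w) * ((\<i> * z) \<bullet> w) / (cmod z)^2
     + prof'' ?t / 2 * ((\<i> * z) \<bullet> w)^2 / (cmod z)^2"
    using z by (simp add: field_simps power2_eq_square)
  finally show ?thesis .
qed

lemma abs_inner_hessU_le:
  assumes alpha_le: "\<alpha> \<le> 1" and z: "z \<noteq> 0"
  shows "\<bar>w \<bullet> hessU z w\<bar> \<le> (cmod w)^2"
proof -
  let ?t = "Arg2pi z"
  define a where "a = (z \<bullet> w) / cmod z"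
  define b where "b = ((\<i> * z) \<bullet> w) / cmod z"
  have nz: "cmod z > 0" using z by simp
  have ab: "a^2 + b^2 = (cmod w)^2"
    using inner_square_add_inner_ii_square[of z w] nz
      by (simp add: a_def b_def power_divide add_divide_distrib[symmetric])
  have q: "w \<bullet> hessU z w = prof ?t * (a^2 + b^2) + prof' ?t * a * b + prof'' ?t / 2 * b^2"
    unfolding inner_hessU[OF z] ab using nz by (simp add: a_def b_def power_divide power2_eq_square)
  show ?thesis
  proof (cases "?t < kink")
    case True
    let ?C = "cos (2 * \<alpha> * ?t)" and ?S = "sin (2 * \<alpha> * ?t)"
    have "w \<bullet> hessU z w = ?C * (a^2 + b^2) - 2 * \<alpha> * ?S * a * b - 2 * \<alpha>^2 * ?C * b^2"
      unfolding q using True by (simp add: prof_def prof'_def prof''_def)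
    then show ?thesis using polar_hessian_form_bound[of ?C ?S \<alpha> a b] alpha_le alpha_pos ab by simp
  next
    case False
    let ?C = "cos (2 * \<beta> * (2 * pi - ?t))" and ?S = "- sin (2 * \<beta> * (2 * pi - ?t))"
    have "w \<bullet> hessU z w = ?C * (a^2 + b^2) - 2 * \<beta> * ?S * a * b - 2 * \<beta>^2 * ?C * b^2"
      unfolding q using False by (simp add: prof_def prof'_def prof''_def)
    then show ?thesis using polar_hessian_form_bound[of ?C ?S \<beta> a b] beta_pos beta_less ab by simp
  qed
qed

lemma hessU_exceeds_Id:
  assumes alpha_gt_1: "\<alpha> > 1"
  defines "z \<equiv> cis (kink / 2)"
  shows "((1 - \<i>) * z) \<bullet> hessU z ((1 - \<i>) * z) > (cmod ((1 - \<i>) * z))^2"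
proof -
  have half_kink: "0 < kink / 2" "kink / 2 < pi" using kink_pos kink_less_pi by auto
  have arg: "Arg2pi z = kink / 2"
    unfolding z_def by (rule Arg2pi_unique[of 1]) (use half_kink in \<open>auto simp: cis_conv_exp\<close>)
  have z0: "z \<noteq> 0" by (simp add: z_def)
  have quarter: "\<alpha> * kink = pi / 2" using alpha_kink by simp
  have v: "prof (kink / 2) = 0" "prof' (kink / 2) = - 2 * \<alpha>" "prof'' (kink / 2) = 0"
    using kink_pos by (auto simp: prof_def prof'_def prof''_def quarter)
  have cs: "(cos (kink / 2))^2 + (sin (kink / 2))^2 = 1" by simp
  have i1: "z \<bullet> ((1 - \<i>) * z) = 1" and i2: "(\<i> * z) \<bullet> ((1 - \<i>) * z) = - 1"
    unfolding z_def using cs by (simp_all add: inner_complex_def algebra_simps power2_eq_square)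
  have nw: "(cmod ((1 - \<i>) * z))^2 = 2"
    unfolding z_def cmod_power2 using cs by (simp add: algebra_simps power2_eq_square)
  have "((1 - \<i>) * z) \<bullet> hessU z ((1 - \<i>) * z) = 2 * \<alpha>"
    unfolding inner_hessU[OF z0] arg v i1 i2 nw by (simp add: z_def)
  then show ?thesis using nw alpha_gt_1 by simp
qed

lemma inner_ii_hessU_ii: "\<i> \<bullet> hessU (Complex 1 t) \<i> =
    prof (Arg2pi (Complex 1 t)) + prof' (Arg2pi (Complex 1 t)) * t / (1 + t^2)
     + prof'' (Arg2pi (Complex 1 t)) / 2 / (1 + t^2)"
proof -
  have z0: "Complex 1 t \<noteq> 0" by (simp add: complex_eq_iff)
  have n: "(cmod (Complex 1 t))^2 = 1 + t^2" by (simp add: cmod_power2)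
  show ?thesis unfolding inner_hessU[OF z0] n by (simp add: inner_complex_def)
qed

lemma tendsto_Arg2pi_Complex_1_right: "((\<lambda>t. Arg2pi (Complex 1 t)) \<longlongrightarrow> 0) (at_right 0)"
proof -
  have c: "((\<lambda>t. Complex 1 t) \<longlongrightarrow> Complex 1 0) (at_right 0)"
    by (intro tendsto_intros)
  have i: "isCont Arg (Complex 1 0)" by (rule continuous_at_Arg) (simp add: complex_nonpos_Reals_iff)
  have "((\<lambda>t. Arg (Complex 1 t)) \<longlongrightarrow> Arg (Complex 1 0)) (at_right 0)"
    using isCont_tendsto_compose[OF i c] .
  moreover have "Arg (Complex 1 0) = 0" by (simp add: Arg_eq_0 complex_is_Real_iff)
  moreover have "\<forall>\<^sub>F t in at_right 0. Arg (Complex 1 t) = Arg2pi (Complex 1 t)"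
    unfolding eventually_at_right_field by (intro exI[of _ 1]) (auto intro!: Arg_eq_Arg2pi)
  ultimately show ?thesis by (auto intro: Lim_transform_eventually)
qed

lemma tendsto_Arg2pi_Complex_1_left: "((\<lambda>t. Arg2pi (Complex 1 t)) \<longlongrightarrow> 2 * pi) (at_left 0)"
proof -
  have c: "((\<lambda>t. Complex 1 t) \<longlongrightarrow> Complex 1 0) (at_left 0)"
    by (intro tendsto_intros)
  have i: "isCont Arg (Complex 1 0)" by (rule continuous_at_Arg) (simp add: complex_nonpos_Reals_iff)
  have "((\<lambda>t. Arg (Complex 1 t) + 2 * pi) \<longlongrightarrow> Arg (Complex 1 0) + 2 * pi) (at_left 0)"
    using isCont_tendsto_compose[OF i c] by (intro tendsto_add tendsto_const)
  moreover have "Arg (Complex 1 0) = 0" by (simp add: Arg_eq_0 complex_is_Real_iff)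
  moreover have "\<forall>\<^sub>F t in at_left 0. Arg (Complex 1 t) + 2 * pi = Arg2pi (Complex 1 t)"
    unfolding eventually_at_left_field
      by (intro exI[of _ "-1"]) (auto intro!: Arg2pi_eq_Arg_plus_2pi[symmetric])
  ultimately show ?thesis by (auto intro: Lim_transform_eventually)
qed

lemma tendsto_inner_ii_hessU_ii_right: "((\<lambda>t. \<i> \<bullet> hessU (Complex 1 t) \<i>) \<longlongrightarrow> 1 - 2 * \<alpha>\<^sup>2) (at_right 0)"
proof -
  let ?th = "\<lambda>t. Arg2pi (Complex 1 t)"
  have 1: "((\<lambda>t. prof (?th t)) \<longlongrightarrow> prof 0) (at_right 0)"
    by (rule isCont_tendsto_compose[OF isCont_prof tendsto_Arg2pi_Complex_1_right])
  have 2: "((\<lambda>t. prof' (?th t)) \<longlongrightarrow> prof' 0) (at_right 0)"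
    by (rule isCont_tendsto_compose[OF isCont_prof' tendsto_Arg2pi_Complex_1_right])
  have 3: "((\<lambda>t. prof'' (?th t)) \<longlongrightarrow> prof'' 0) (at_right 0)"
    using kink_pos by (intro isCont_tendsto_compose[OF isCont_prof'' tendsto_Arg2pi_Complex_1_right]) auto
  have v: "prof 0 = 1" "prof' 0 = 0" "prof'' 0 = - 4 * \<alpha>\<^sup>2" using kink_pos
    by (auto simp: prof_def prof'_def prof''_def)
  have t: "((\<lambda>t::real. t) \<longlongrightarrow> 0) (at_right 0)" by (rule tendsto_ident_at)
  have "((\<lambda>t. prof (?th t) + prof' (?th t) * t / (1 + t^2) + prof'' (?th t) / 2 / (1 + t^2)) \<longlongrightarrow>
      prof 0 + prof' 0 * 0 / (1 + 0^2) + prof'' 0 / 2 / (1 + 0^2)) (at_right 0)"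
    by (intro tendsto_intros 1 2 3 t) auto
  then show ?thesis unfolding inner_ii_hessU_ii v by simp
qed

lemma tendsto_inner_ii_hessU_ii_left: "((\<lambda>t. \<i> \<bullet> hessU (Complex 1 t) \<i>) \<longlongrightarrow> 1 - 2 * \<beta>\<^sup>2) (at_left 0)"
proof -
  let ?th = "\<lambda>t. Arg2pi (Complex 1 t)"
  have ne_kink: "2 * pi \<noteq> kink" using kink_less_pi pi_gt_zero by linarith
  have 1: "((\<lambda>t. prof (?th t)) \<longlongrightarrow> prof (2 * pi)) (at_left 0)"
    by (rule isCont_tendsto_compose[OF isCont_prof tendsto_Arg2pi_Complex_1_left])
  have 2: "((\<lambda>t. prof' (?th t)) \<longlongrightarrow> prof' (2 * pi)) (at_left 0)"
    by (rule isCont_tendsto_compose[OF isCont_prof' tendsto_Arg2pi_Complex_1_left])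
  have 3: "((\<lambda>t. prof'' (?th t)) \<longlongrightarrow> prof'' (2 * pi)) (at_left 0)"
    by (rule isCont_tendsto_compose[OF isCont_prof''[OF ne_kink] tendsto_Arg2pi_Complex_1_left])
  have not_less_kink: "\<not> 2 * pi < kink" using kink_less_pi pi_gt_zero by linarith
  have v: "prof (2 * pi) = 1" "prof' (2 * pi) = 0" "prof'' (2 * pi) = - 4 * \<beta>\<^sup>2" using not_less_kink
    by (auto simp: prof_def prof'_def prof''_def)
  have t: "((\<lambda>t::real. t) \<longlongrightarrow> 0) (at_left 0)" by (rule tendsto_ident_at)
  have "((\<lambda>t. prof (?th t) + prof' (?th t) * t / (1 + t^2) + prof'' (?th t) / 2 / (1 + t^2)) \<longlongrightarrow>
      prof (2 * pi) + prof' (2 * pi) * 0 / (1 + 0^2) + prof'' (2 * pi) / 2 / (1 + 0^2)) (at_left 0)"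
    by (intro tendsto_intros 1 2 3 t) auto
  then show ?thesis unfolding inner_ii_hessU_ii v by simp
qed

end

section \<open>Transfer to the plane\<close>

lemma inner_vec2: "(x::real^2) \<bullet> y = x$1 * y$1 + x$2 * y$2"
  by (simp add: inner_vec_def sum_2)

lemma perp2_nth [simp]: "perp2 v $ 1 = - (v $ 2)" "perp2 v $ 2 = v $ 1"
  by (simp_all add: perp2_def)

lemma norm_vec2_square: "(norm (x::real^2))^2 = (x$1)^2 + (x$2)^2"
  unfolding power2_norm_eq_inner inner_vec2 by (simp add: power2_eq_square)

lemma null_sets_hyperplane:
  fixes n :: "'a::euclidean_space"
  shows "n \<noteq> 0 \<Longrightarrow> {x. n \<bullet> x = c} \<in> null_sets lebesgue"
  using negligible_hyperplane negligible_iff_null_sets by blast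

lemma finite_line_inter_hyperplane:
  fixes n :: "'a::euclidean_space"
  assumes "n \<bullet> x \<noteq> c"
  shows "finite {t. n \<bullet> (x + t *\<^sub>R d) = c}"
proof (cases "n \<bullet> d = 0")
  case True
  then show ?thesis using assms by (simp add: inner_add_right)
next
  case False
  then have "{t. n \<bullet> (x + t *\<^sub>R d) = c} \<subseteq> {(c - n \<bullet> x) / (n \<bullet> d)}"
    by (auto simp: inner_add_right field_simps)
  then show ?thesis using finite_subset by blast
qed

text \<open>With \<open>e = x1 - z0\<close> and the orientation \<open>s\<close> of \<^const>\<open>polar_theta\<close>, \<open>to_complex (x - z0)\<close> is
  \<open>\<bar>e\<bar>\<close> times the complex number with modulus \<open>\<rho>(x)\<close> and argument \<open>\<theta>(x)\<close>; \<open>from_complex\<close> is the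
  adjoint of \<open>to_complex\<close>.\<close>
locale planar_model = profile +
  fixes z0 e :: "real^2" and s :: real
  assumes e_nonzero: "e \<noteq> 0" and s_sign: "s = 1 \<or> s = -1"
begin

definition to_complex :: "real^2 \<Rightarrow> complex" where "to_complex p = Complex (p \<bullet> e) (s * (p \<bullet> perp2 e))"
definition from_complex :: "complex \<Rightarrow> real^2" where "from_complex w = Re w *\<^sub>R e + (s * Im w) *\<^sub>R perp2 e"
definition k :: real where "k = norm e"

lemma s_square: "s * s = 1" using s_sign by auto
lemma k_pos: "k > 0" using e_nonzero by (simp add: k_def)

lemma linear_to_complex: "linear to_complex"
  by (rule linearI) (simp_all add: to_complex_def complex_eq_iff inner_add_left algebra_simps)

lemma bounded_linear_to_complex: "bounded_linear to_complex"
  using linear_to_complex linear_conv_bounded_linear by blast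

lemma linear_from_complex: "linear from_complex"
  by (rule linearI) (simp_all add: from_complex_def algebra_simps scaleR_add_left)

lemma bounded_linear_from_complex: "bounded_linear from_complex"
  using linear_from_complex linear_conv_bounded_linear by blast

lemma cmod_to_complex_square: "(cmod (to_complex p))^2 = k^2 * (norm p)^2"
proof -
  have "(cmod (to_complex p))^2 = (p \<bullet> e)^2 + (s * (p \<bullet> perp2 e))^2" by (simp add: to_complex_def cmod_power2)
  also have "\<dots> = (p \<bullet> e)^2 + (p \<bullet> perp2 e)^2" using s_square by (simp add: power2_eq_square algebra_simps)
  also have "\<dots> = k^2 * (norm p)^2"
    unfolding k_def norm_vec2_square inner_vec2 by (simp add: power2_eq_square algebra_simps)
  finally show ?thesis .
qed

lemma cmod_to_complex: "cmod (to_complex p) = k * norm p"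
  using cmod_to_complex_square[of p] k_pos
    by (metis norm_ge_zero power2_eq_imp_eq power_mult_distrib zero_le_mult_iff less_imp_le)

lemma inner_to_complex: "to_complex v \<bullet> w = v \<bullet> from_complex w"
  by (simp add: to_complex_def from_complex_def inner_complex_def inner_add_right algebra_simps)

lemma to_complex_from_complex: "to_complex (from_complex w) = of_real (k^2) * w"
proof -
  have "from_complex w \<bullet> e = Re w * k^2" "from_complex w \<bullet> perp2 e = s * Im w * k^2"
    unfolding from_complex_def k_def power2_norm_eq_inner
      by (simp_all add: inner_add_left inner_vec2 algebra_simps)
  then show ?thesis using s_square by (simp add: to_complex_def complex_eq_iff algebra_simps)
qed

lemma norm_from_complex: "norm (from_complex w) = k * cmod w"
proof -
  have "(norm (from_complex w))^2 = to_complex (from_complex w) \<bullet> w"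
    by (simp add: inner_to_complex power2_norm_eq_inner)
  also have "\<dots> = k^2 * (cmod w)^2"
    by (simp add: to_complex_from_complex inner_of_real_mult_right[symmetric] power2_norm_eq_inner inner_commute)
  finally have "(norm (from_complex w))^2 = (k * cmod w)^2" by (simp add: power_mult_distrib)
  then show ?thesis using k_pos by (simp add: power2_eq_imp_eq)
qed

definition u :: "real^2 \<Rightarrow> real" where
  "u x = U (to_complex (x - z0)) / k^2"
definition grad_u :: "real^2 \<Rightarrow> real^2" where
  "grad_u x = (1 / k^2) *\<^sub>R from_complex (gradU (to_complex (x - z0)))"
definition kink_lines :: "(real^2) set" where
  "kink_lines = {x. Im (to_complex (x - z0)) = 0} \<union> {x. Im (cnj (cis kink) * to_complex (x - z0)) = 0}"
definition hess_map :: "real^2 \<Rightarrow> real^2 \<Rightarrow> real^2" where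
  "hess_map x v = (1 / k^2) *\<^sub>R from_complex (hessU (to_complex (x - z0)) (to_complex v))"
definition hess_u :: "real^2 \<Rightarrow> real^2^2" where
  "hess_u x = (if x \<in> kink_lines then 0 else matrix (hess_map x))"

lemma to_complex_shift_has_derivative: "((\<lambda>x. to_complex (x - z0)) has_derivative to_complex) (at x)"
proof -
  have "((\<lambda>x. x - z0) has_derivative (\<lambda>v. v - 0)) (at x)"
    by (intro has_derivative_diff has_derivative_ident has_derivative_const)
  then have "((\<lambda>x. x - z0) has_derivative (\<lambda>v. v)) (at x)" by simp
  then show ?thesis by (rule bounded_linear.has_derivative[OF bounded_linear_to_complex])
qed

lemma isCont_to_complex_shift: "isCont (\<lambda>x. to_complex (x - z0)) x"
  using to_complex_shift_has_derivative has_derivative_continuous by blast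

lemma u_has_derivative: "(u has_derivative (\<lambda>v. grad_u x \<bullet> v)) (at x)"
proof -
  have "((\<lambda>x. U (to_complex (x - z0))) has_derivative (\<lambda>v. gradU (to_complex (x - z0)) \<bullet> to_complex v)) (at x)"
    using has_derivative_compose[OF to_complex_shift_has_derivative U_has_derivative] .
  then have "((\<lambda>x. (1 / k^2) * U (to_complex (x - z0))) has_derivative
      (\<lambda>v. (1 / k^2) * (gradU (to_complex (x - z0)) \<bullet> to_complex v))) (at x)"
    by (rule has_derivative_mult_right)
  moreover have "(\<lambda>v. (1 / k^2) * (gradU (to_complex (x - z0)) \<bullet> to_complex v)) = (\<lambda>v. grad_u x \<bullet> v)"
    by (auto simp: grad_u_def inner_commute inner_to_complex)
  ultimately show ?thesis unfolding u_def[abs_def] by simp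
qed

lemma continuous_grad_u: "continuous_on UNIV grad_u"
proof -
  have "isCont grad_u x" for x
  proof -
    have "isCont (\<lambda>x. gradU (to_complex (x - z0))) x"
      using isCont_o2[OF isCont_to_complex_shift isCont_gradU] .
    then have "isCont (\<lambda>x. from_complex (gradU (to_complex (x - z0)))) x"
      using isCont_o2 linear_continuous_at[OF bounded_linear_from_complex] by blast
    then show ?thesis unfolding grad_u_def[abs_def] by (intro continuous_intros)
  qed
  then show ?thesis by (simp add: continuous_at_imp_continuous_on)
qed

lemma not_in_kink_lines: "x \<notin> kink_lines \<Longrightarrow> to_complex (x - z0) \<notin> \<real>\<^sub>\<ge>\<^sub>0 \<and> Arg2pi (to_complex (x - z0)) \<noteq> kink"
proof -
  assume x: "x \<notin> kink_lines"
  let ?z = "to_complex (x - z0)"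
  have im: "Im ?z \<noteq> 0" and im2: "Im (cnj (cis kink) * ?z) \<noteq> 0" using x by (auto simp: kink_lines_def)
  have "?z \<notin> \<real>\<^sub>\<ge>\<^sub>0" using im by (auto simp: complex_nonneg_Reals_iff)
  moreover have "Arg2pi ?z \<noteq> kink"
  proof
    assume a: "Arg2pi ?z = kink"
    have "?z = of_real (cmod ?z) * exp (\<i> * of_real (Arg2pi ?z))"
      using Arg2pi[of ?z] by (simp add: is_Arg_def)
    then have "?z = of_real (cmod ?z) * cis kink" using a by (simp add: cis_conv_exp)
    then have "cnj (cis kink) * ?z = of_real (cmod ?z)"
      by (metis (no_types, lifting) cis_cnj cis_mult complex_cnj_cancel_iff mult.left_commute mult.right_neutral
          add.right_inverse cis_zero)
    then show False using im2 by simp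
  qed
  ultimately show ?thesis by blast
qed

lemma linear_hess_map: "linear (hess_map x)"
proof -
  have "linear (\<lambda>v. from_complex (hessU (to_complex (x - z0)) (to_complex v)))"
    using linear_compose[OF linear_compose[OF linear_to_complex linear_hessU] linear_from_complex]
      by (simp add: o_def)
  then show ?thesis unfolding hess_map_def[abs_def] by (intro linear_compose_scale_right) 
qed

lemma hess_u_mult: "x \<notin> kink_lines \<Longrightarrow> hess_u x *v v = hess_map x v"
  using matrix_works[OF linear_hess_map[unfolded linear_matrix_vector_mul_eq[symmetric]]]
    by (simp add: hess_u_def)

lemma grad_u_has_derivative: "x \<notin> kink_lines \<Longrightarrow> (grad_u has_derivative (\<lambda>v. hess_u x *v v)) (at x)"
proof -
  assume x: "x \<notin> kink_lines"
  have d: "(gradU has_derivative hessU (to_complex (x - z0))) (at (to_complex (x - z0)))"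
    using not_in_kink_lines[OF x] gradU_has_derivative by blast
  have "((\<lambda>x. gradU (to_complex (x - z0))) has_derivative (\<lambda>v. hessU (to_complex (x - z0)) (to_complex v))) (at x)"
    using has_derivative_compose[OF to_complex_shift_has_derivative d] .
  then have "((\<lambda>x. from_complex (gradU (to_complex (x - z0)))) has_derivative
      (\<lambda>v. from_complex (hessU (to_complex (x - z0)) (to_complex v)))) (at x)"
    by (rule bounded_linear.has_derivative[OF bounded_linear_from_complex])
  then have "(grad_u has_derivative hess_map x) (at x)"
    unfolding grad_u_def[abs_def] hess_map_def[abs_def] by (rule has_derivative_scaleR_right)
  then show ?thesis using hess_u_mult[OF x] by simp
qed

definition normal1 :: "real^2" where
  "normal1 = s *\<^sub>R perp2 e"
definition normal2 :: "real^2" where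
  "normal2 = (cos kink * s) *\<^sub>R perp2 e - sin kink *\<^sub>R e"

lemma inner_perp2_self: "perp2 e \<bullet> e = 0" by (simp add: inner_vec2 algebra_simps)
lemma perp2_nonzero: "perp2 e \<noteq> 0" using e_nonzero by (auto simp: vec_eq_iff forall_2)

lemma sin_kink_pos: "sin kink > 0" using kink_pos kink_less_pi by (simp add: sin_gt_zero)

lemma normals_nonzero: "normal1 \<noteq> 0" "normal2 \<noteq> 0"
proof -
  show "normal1 \<noteq> 0" using perp2_nonzero s_square by (auto simp: normal1_def)
  have "normal2 \<bullet> e = - sin kink * (e \<bullet> e)" by (simp add: normal2_def inner_diff_left inner_perp2_self)
  moreover have "e \<bullet> e > 0" using e_nonzero by simp
  ultimately have "normal2 \<bullet> e \<noteq> 0" using sin_kink_pos by simp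
  then show "normal2 \<noteq> 0" by auto
qed

lemma Im_to_complex: "Im (to_complex (x - z0)) = normal1 \<bullet> x - normal1 \<bullet> z0"
  by (simp add: to_complex_def normal1_def inner_diff_left inner_diff_right inner_commute algebra_simps)

lemma Im_rotated_to_complex: "Im (cnj (cis kink) * to_complex (x - z0)) = normal2 \<bullet> x - normal2 \<bullet> z0"
  by (simp add: to_complex_def normal2_def inner_diff_left inner_diff_right inner_commute algebra_simps)

lemma kink_lines_eq: "kink_lines = {x. normal1 \<bullet> x = normal1 \<bullet> z0} \<union> {x. normal2 \<bullet> x = normal2 \<bullet> z0}"
  unfolding kink_lines_def Im_to_complex Im_rotated_to_complex by auto

lemma null_kink_lines: "kink_lines \<in> null_sets lebesgue"
  unfolding kink_lines_eq using null_sets_hyperplane normals_nonzero by auto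

lemma closed_kink_lines: "closed kink_lines"
  unfolding kink_lines_eq by (intro closed_Un closed_hyperplane)

lemma finite_kink_lines_on_line: "x \<notin> kink_lines \<Longrightarrow> finite {t. x + t *\<^sub>R d \<in> kink_lines}"
  unfolding kink_lines_eq
    using finite_line_inter_hyperplane[of normal1 x] finite_line_inter_hyperplane[of normal2 x]
  by (simp add: Collect_disj_eq)

lemma isCont_hess_map: "x \<notin> kink_lines \<Longrightarrow> isCont (\<lambda>x. hess_map x v) x"
proof -
  assume x: "x \<notin> kink_lines"
  have "isCont (\<lambda>z. hessU z (to_complex v)) (to_complex (x - z0))"
    using not_in_kink_lines[OF x] isCont_hessU by blast
  then have "isCont (\<lambda>x. hessU (to_complex (x - z0)) (to_complex v)) x"
    using isCont_o2[OF isCont_to_complex_shift] by blast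
  then have "isCont (\<lambda>x. from_complex (hessU (to_complex (x - z0)) (to_complex v))) x"
    using isCont_o2 linear_continuous_at[OF bounded_linear_from_complex] by blast
  then show ?thesis unfolding hess_map_def by (intro continuous_intros)
qed

lemma hess_u_entry: "hess_u x $ i $ j = (if x \<in> kink_lines then 0 else hess_map x (axis j 1) $ i)"
  by (simp add: hess_u_def matrix_def)

lemma hess_u_measurable: "(\<lambda>x. hess_u x $ i $ j) \<in> borel_measurable borel"
proof -
  have "(\<lambda>x. if x \<in> kink_lines then 0 else hess_map x (axis j 1) $ i) \<in> borel_measurable borel"
  proof (rule borel_measurable_continuous_on_if)
    show "kink_lines \<in> sets borel" using closed_kink_lines by (simp add: borel_closed)
    show "continuous_on kink_lines (\<lambda>x. 0::real)" by simp
    have "isCont (\<lambda>x. hess_map x (axis j 1) $ i) x" if "x \<in> - kink_lines" for x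
      using isCont_hess_map[of x "axis j 1"] that by (auto intro: continuous_intros)
    then show "continuous_on (- kink_lines) (\<lambda>x. hess_map x (axis j 1) $ i)"
      by (simp add: continuous_at_imp_continuous_on)
  qed
  then show ?thesis unfolding hess_u_entry .
qed

definition hess_bound :: real where
  "hess_bound = 1 + 3 * \<alpha> + 2 * \<alpha>\<^sup>2"

lemma norm_hess_map_le: "norm (hess_map x v) \<le> hess_bound * norm v"
proof -
  have "norm (hess_map x v) = (1 / k^2) * (k * cmod (hessU (to_complex (x - z0)) (to_complex v)))"
    by (simp add: hess_map_def norm_from_complex)
  also have "\<dots> \<le> (1 / k^2) * (k * (hess_bound * cmod (to_complex v)))"
    using norm_hessU_le k_pos unfolding hess_bound_def by (intro mult_left_mono) auto
  also have "\<dots> = hess_bound * norm v" using k_pos by (simp add: cmod_to_complex power2_eq_square)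
  finally show ?thesis .
qed

lemma abs_hess_u_le: "\<bar>hess_u x $ i $ j\<bar> \<le> hess_bound"
proof -
  have bound_nonneg: "hess_bound \<ge> 0" using alpha_pos by (simp add: hess_bound_def)
  show ?thesis
  proof (cases "x \<in> kink_lines")
    case True then show ?thesis using bound_nonneg by (simp add: hess_u_entry)
  next
    case False
    have "\<bar>hess_map x (axis j 1) $ i\<bar> \<le> norm (hess_map x (axis j 1))" by (rule component_le_norm_cart)
    also have "\<dots> \<le> hess_bound" using norm_hess_map_le[of x "axis j 1"] by simp
    finally show ?thesis using False by (simp add: hess_u_entry)
  qed
qed

lemma inner_hess_u: "x \<notin> kink_lines \<Longrightarrow>
    v \<bullet> (hess_u x *v v) = (1 / k^2) * (to_complex v \<bullet> hessU (to_complex (x - z0)) (to_complex v))"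
  by (simp add: hess_u_mult hess_map_def inner_to_complex)

lemma abs_inner_hess_u_le: "\<alpha> \<le> 1 \<Longrightarrow> x \<notin> kink_lines \<Longrightarrow> \<bar>v \<bullet> (hess_u x *v v)\<bar> \<le> (norm v)^2"
proof -
  assume alpha_le: "\<alpha> \<le> 1" and x: "x \<notin> kink_lines"
  have z: "to_complex (x - z0) \<noteq> 0" using not_in_kink_lines[OF x] by auto
  have "\<bar>v \<bullet> (hess_u x *v v)\<bar> = (1 / k^2) * \<bar>to_complex v \<bullet> hessU (to_complex (x - z0)) (to_complex v)\<bar>"
    using k_pos by (simp add: inner_hess_u[OF x] abs_mult)
  also have "\<dots> \<le> (1 / k^2) * (cmod (to_complex v))^2"
    using abs_inner_hessU_le[OF alpha_le z] k_pos by (intro mult_left_mono) auto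
  also have "\<dots> = (norm v)^2" using k_pos by (simp add: cmod_to_complex_square)
  finally show ?thesis .
qed

lemma to_complex_scaleR: "to_complex (c *\<^sub>R y) = of_real c * to_complex y"
  by (simp add: to_complex_def complex_eq_iff)

lemma to_complex_scaled_from_complex: "to_complex ((1 / k^2) *\<^sub>R from_complex w) = w"
  using k_pos by (simp add: to_complex_scaleR to_complex_from_complex)

sublocale ae_hessian u grad_u hess_u kink_lines hess_bound
  using u_has_derivative continuous_grad_u grad_u_has_derivative hess_u_measurable abs_hess_u_le
    null_kink_lines finite_kink_lines_on_line by unfold_locales

lemma to_complex_point: "to_complex ((z0 + (1 / k^2) *\<^sub>R from_complex w) - z0) = w"
  by (simp add: to_complex_scaled_from_complex)

lemma isCont_hess_u_form:
  assumes x0: "x0 \<notin> kink_lines"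
  shows "isCont (\<lambda>x. v \<bullet> (hess_u x *v v)) x0"
proof -
  have "\<forall>\<^sub>F x in nhds x0. x \<in> - kink_lines" using closed_kink_lines x0 by (intro eventually_nhds_in_open) auto
  then have ev: "\<forall>\<^sub>F x in nhds x0.
      (1 / k^2) * (to_complex v \<bullet> hessU (to_complex (x - z0)) (to_complex v)) = v \<bullet> (hess_u x *v v)"
    by eventually_elim (simp add: inner_hess_u)
  have "isCont (\<lambda>z. hessU z (to_complex v)) (to_complex (x0 - z0))"
    using not_in_kink_lines[OF x0] isCont_hessU by blast
  then have "isCont (\<lambda>x. (1 / k^2) * (to_complex v \<bullet> hessU (to_complex (x - z0)) (to_complex v))) x0"
    using isCont_o2[OF isCont_to_complex_shift] by (intro continuous_intros) blast
  then show ?thesis using isCont_cong[OF ev] by blast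
qed

lemma no_weak_hessian_bounded_by_Id_if_alpha_gt_1:
  assumes "\<alpha> > 1"
  shows "\<not> (\<exists>H. weak_hessian u H \<and> (AE x in lebesgue. \<forall>v. \<bar>v \<bullet> (H x *v v)\<bar> \<le> norm v ^ 2))"
proof -
  define z where "z = cis (kink / 2)"
  define w where "w = (1 - \<i>) * z"
  define x0 where "x0 = z0 + (1 / k^2) *\<^sub>R from_complex z"
  define v0 where "v0 = (1 / k^2) *\<^sub>R from_complex w"
  have x0: "to_complex (x0 - z0) = z" unfolding x0_def by (rule to_complex_point)
  have v0: "to_complex v0 = w" unfolding v0_def by (rule to_complex_scaled_from_complex)
  have kink2: "0 < kink / 2" "kink / 2 < pi" using kink_pos kink_less_pi by auto
  have "sin (kink / 2) > 0" using kink2 by (simp add: sin_gt_zero)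
  then have "Im z \<noteq> 0" "Im (cnj (cis kink) * z) \<noteq> 0"
    unfolding z_def by (auto simp: cis_cnj cis_mult)
  then have x0_off: "x0 \<notin> kink_lines" unfolding kink_lines_def using x0 by auto
  have "(norm v0)^2 = (1 / k^2) * (cmod w)^2"
    using cmod_to_complex_square[of v0] v0 k_pos by (simp add: field_simps)
  also have "\<dots> < (1 / k^2) * (w \<bullet> hessU z w)"
    using hessU_exceeds_Id[OF assms] k_pos unfolding z_def w_def by (intro mult_strict_left_mono) auto
  also have "\<dots> = v0 \<bullet> (hess_u x0 *v v0)" using inner_hess_u[OF x0_off] x0 v0 by simp
  finally have "v0 \<bullet> (hess_u x0 *v v0) > norm v0 ^ 2" .
  then show ?thesis by (rule no_weak_hessian_bounded_by_Id[OF isCont_hess_u_form[OF x0_off]])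
qed

lemma weak_hessian_bounded_by_Id_if_alpha_le_1:
  assumes "\<alpha> \<le> 1"
  shows "\<exists>H. weak_hessian u H \<and> (AE x in lebesgue. \<forall>v. \<bar>v \<bullet> (H x *v v)\<bar> \<le> norm v ^ 2)"
proof (intro exI conjI)
  show "weak_hessian u hess_u" by (rule weak_hessian)
  show "AE x in lebesgue. \<forall>v. \<bar>v \<bullet> (hess_u x *v v)\<bar> \<le> norm v ^ 2"
    using AE_not_in[OF null_kink_lines] by eventually_elim (use abs_inner_hess_u_le[OF assms] in auto)
qed

text \<open>Along the vertical line \<open>Re = 1\<close>, which crosses the ray \<open>arg = 0\<close>, the second derivative
  of \<open>U\<close> in the direction \<open>\<i>\<close> tends to \<open>1 - 2\<alpha>\<^sup>2\<close> from one side and to \<open>1 - 2\<beta>\<^sup>2\<close> from the other.\<close>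
lemma not_Ck2_u: "\<not> Ck 2 u"
proof
  assume "Ck 2 u"
  define v0 where "v0 = (1 / k^2) *\<^sub>R from_complex \<i>"
  have v0: "to_complex v0 = \<i>" unfolding v0_def by (rule to_complex_scaled_from_complex)
  obtain Q where Q: "continuous_on UNIV Q" "\<And>x. x \<notin> kink_lines \<Longrightarrow> Q x = v0 \<bullet> (hess_u x *v v0)"
    using Ck2_imp_continuous_hessian_form[OF \<open>Ck 2 u\<close>] by blast
  define p where "p t = z0 + (1 / k^2) *\<^sub>R from_complex (Complex 1 t)" for t
  have p: "to_complex (p t - z0) = Complex 1 t" for t unfolding p_def by (rule to_complex_point)
  have "isCont (\<lambda>t. Complex 1 t) t" for t unfolding isCont_def by (intro tendsto_Complex tendsto_intros)
  then have "isCont (\<lambda>t. from_complex (Complex 1 t)) t" for t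
    using isCont_o2 linear_continuous_at[OF bounded_linear_from_complex] by blast
  then have "isCont p 0" unfolding p_def by (intro continuous_intros)
  moreover have "isCont Q (p 0)" using Q(1) by (simp add: continuous_on_eq_continuous_at)
  ultimately have "isCont (\<lambda>t. Q (p t)) 0" by (rule isCont_o2)
  then have lim: "((\<lambda>t. Q (p t)) \<longlongrightarrow> Q (p 0)) (at 0 within S)" for S
    by (simp add: isCont_def tendsto_mono[OF at_le[OF subset_UNIV]])
  have "\<forall>\<^sub>F t in at 0. (1 / k^2) * (\<i> \<bullet> hessU (Complex 1 t) \<i>) = Q (p t)"
  proof -
    have "((\<lambda>t. cos kink * t - sin kink) \<longlongrightarrow> cos kink * 0 - sin kink) (at (0::real))"
      by (intro tendsto_intros)
    then have "\<forall>\<^sub>F t in at 0. cos kink * t - sin kink < 0"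
      using sin_kink_pos by (intro order_tendstoD) auto
    moreover have "\<forall>\<^sub>F t in at (0::real). t \<noteq> 0" by (simp add: eventually_at_filter)
    ultimately show ?thesis
    proof eventually_elim
      case (elim t)
      then have "p t \<notin> kink_lines" unfolding kink_lines_def by (simp add: p)
      then show ?case using Q(2) inner_hess_u v0 p by simp
    qed
  qed
  then have ev: "\<forall>\<^sub>F t in at 0 within S. (1 / k^2) * (\<i> \<bullet> hessU (Complex 1 t) \<i>) = Q (p t)" for S
    using filter_leD[OF at_le[OF subset_UNIV]] by blast
  have "((\<lambda>t. (1 / k^2) * (\<i> \<bullet> hessU (Complex 1 t) \<i>)) \<longlongrightarrow> (1 / k^2) * (1 - 2 * \<alpha>\<^sup>2)) (at_right 0)"
    by (intro tendsto_intros tendsto_inner_ii_hessU_ii_right)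
  then have "((\<lambda>t. Q (p t)) \<longlongrightarrow> (1 / k^2) * (1 - 2 * \<alpha>\<^sup>2)) (at_right 0)"
    using ev by (rule Lim_transform_eventually)
  from tendsto_unique[OF trivial_limit_at_right_real this lim]
  have "(1 / k^2) * (1 - 2 * \<alpha>\<^sup>2) = Q (p 0)" .
  moreover have "((\<lambda>t. (1 / k^2) * (\<i> \<bullet> hessU (Complex 1 t) \<i>)) \<longlongrightarrow> (1 / k^2) * (1 - 2 * \<beta>\<^sup>2)) (at_left 0)"
    by (intro tendsto_intros tendsto_inner_ii_hessU_ii_left)
  then have "((\<lambda>t. Q (p t)) \<longlongrightarrow> (1 / k^2) * (1 - 2 * \<beta>\<^sup>2)) (at_left 0)"
    using ev by (rule Lim_transform_eventually)
  from tendsto_unique[OF trivial_limit_at_left_real this lim]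
  have "(1 / k^2) * (1 - 2 * \<beta>\<^sup>2) = Q (p 0)" .
  ultimately have "(1 / k^2) * (1 - 2 * \<alpha>\<^sup>2) = (1 / k^2) * (1 - 2 * \<beta>\<^sup>2)" by simp
  then have "\<alpha>\<^sup>2 = \<beta>\<^sup>2" using k_pos by simp
  then show False using alpha_gt beta_pos beta_less by (simp add: power2_eq_iff)
qed

end

section \<open>Geometry of the configuration\<close>

lemma inner_div_norms_bounds:
  fixes v w :: "'a::real_inner"
  assumes "v \<noteq> 0" "w \<noteq> 0"
  shows "-1 \<le> (v \<bullet> w) / (norm v * norm w)" "(v \<bullet> w) / (norm v * norm w) \<le> 1"
proof -
  have p: "norm v * norm w > 0" using assms by simp
  have "\<bar>v \<bullet> w\<bar> \<le> norm v * norm w" by (rule Cauchy_Schwarz_ineq2)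
  then show "-1 \<le> (v \<bullet> w) / (norm v * norm w)" "(v \<bullet> w) / (norm v * norm w) \<le> 1"
    using p by (auto simp: divide_le_eq le_divide_eq abs_le_iff)
qed

lemma vec_angle_nonneg: "vec_angle v w \<ge> 0"
  using inner_div_norms_bounds[of v w] by (auto simp: vec_angle_def intro!: arccos_lbound)

lemma inner_nonpos_iff_vec_angle_ge: "(v \<bullet> w \<le> 0) \<longleftrightarrow> vec_angle v w \<ge> pi / 2"
proof (cases "v = 0 \<or> w = 0")
  case True then show ?thesis by (auto simp: vec_angle_def)
next
  case False
  then have nz: "v \<noteq> 0" "w \<noteq> 0" by auto
  let ?t = "(v \<bullet> w) / (norm v * norm w)"
  have p: "norm v * norm w > 0" using nz by simp
  have r: "-1 \<le> ?t" "?t \<le> 1" using inner_div_norms_bounds[OF nz] by auto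
  have "?t \<le> 0 \<longleftrightarrow> arccos ?t \<ge> pi / 2"
  proof
    assume "?t \<le> 0" then show "arccos ?t \<ge> pi / 2" using arccos_le_arccos[of ?t 0] r by simp
  next
    assume a: "arccos ?t \<ge> pi / 2"
    show "?t \<le> 0"
    proof (rule ccontr)
      assume "\<not> ?t \<le> 0"
      then have "arccos ?t < arccos 0" using arccos_less_arccos[of 0 ?t] r by simp
      then show False using a by simp
    qed
  qed
  moreover have "?t \<le> 0 \<longleftrightarrow> v \<bullet> w \<le> 0" using p by (simp add: divide_le_0_iff)
  ultimately show ?thesis using nz by (simp add: vec_angle_def)
qed

lemma vec_angle_eq_pi_imp_opposite: "vec_angle v w = pi \<Longrightarrow> \<exists>l>0. v = (- l) *\<^sub>R w"
proof -
  assume a: "vec_angle v w = pi"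
  then have nz: "v \<noteq> 0" "w \<noteq> 0" by (auto simp: vec_angle_def split: if_splits)
  let ?t = "(v \<bullet> w) / (norm v * norm w)"
  have r: "?t \<in> {-1..1}" using inner_div_norms_bounds[OF nz] by auto
  have "arccos ?t = pi" using a nz by (simp add: vec_angle_def)
  then have "?t = -1" using arccos_eq_pi_iff[OF r] by simp
  then have "v \<bullet> w = - (norm v * norm w)" using nz by (simp add: divide_eq_eq)
  then have "(- v) \<bullet> w = norm (- v) * norm w" by simp
  then have "norm (- v) *\<^sub>R w = norm w *\<^sub>R (- v)" using norm_cauchy_schwarz_eq by blast
  then have h: "norm v *\<^sub>R w = - (norm w *\<^sub>R v)" by simp
  have "(1 / norm w) *\<^sub>R (norm v *\<^sub>R w) = (1 / norm w) *\<^sub>R (- (norm w *\<^sub>R v))" using h by simp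
  then have "(norm v / norm w) *\<^sub>R w = - v" using nz by simp
  then have "v = (- (norm v / norm w)) *\<^sub>R w" by (metis minus_minus scaleR_minus_left)
  moreover have "norm v / norm w > 0" using nz by simp
  ultimately show ?thesis by blast
qed

lemma vec_angle_le_pi: "vec_angle v w \<le> pi"
proof (cases "v = 0 \<or> w = 0")
  case True then show ?thesis by (auto simp: vec_angle_def)
next
  case False
  then show ?thesis using inner_div_norms_bounds[of v w] by (auto simp: vec_angle_def intro!: arccos_ubound)
qed

lemma weighted_sum_zero_imp_opposite:
  fixes x1 x2 :: "'a::real_vector"
  assumes "\<mu>1 > 0" "\<mu>2 > 0" "\<mu>1 *\<^sub>R x1 + \<mu>2 *\<^sub>R x2 = 0"
  shows "x2 = (- (\<mu>1 / \<mu>2)) *\<^sub>R x1"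
proof -
  have "x2 = (1 / \<mu>2) *\<^sub>R (\<mu>2 *\<^sub>R x2)" using assms(2) by simp
  also have "\<mu>2 *\<^sub>R x2 = - (\<mu>1 *\<^sub>R x1)" using assms(3) by (simp add: eq_neg_iff_add_eq_0 add.commute)
  finally show ?thesis by simp
qed

lemma collinear_if_on_line:
  assumes "\<And>p. p \<in> S \<Longrightarrow> \<exists>c. p = q + c *\<^sub>R w"
  shows "collinear S"
  unfolding collinear_alt using assms by blast

lemma not_in_affine_hull_opposites:
  fixes x1 y1 :: "'a::real_vector"
  assumes "\<not> collinear {x1, (- m) *\<^sub>R x1, y1, (- n) *\<^sub>R y1}" and "m > 0" "n > 0"
  shows "x1 \<notin> affine hull {(- m) *\<^sub>R x1, (- n) *\<^sub>R y1}"
proof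
  assume "x1 \<in> affine hull {(- m) *\<^sub>R x1, (- n) *\<^sub>R y1}"
  then obtain c d where "x1 = c *\<^sub>R ((- m) *\<^sub>R x1) + d *\<^sub>R ((- n) *\<^sub>R y1)" "c + d = 1"
    unfolding affine_hull_2 by blast
  then have eq: "(1 + c * m) *\<^sub>R x1 = (- (d * n)) *\<^sub>R y1"
    by (simp add: algebra_simps eq_neg_iff_add_eq_0)
  have "collinear {x1, (- m) *\<^sub>R x1, y1, (- n) *\<^sub>R y1}"
  proof (cases "d = 0")
    case True
    with eq \<open>c + d = 1\<close> have "(1 + m) *\<^sub>R x1 = 0" by simp
    then have "x1 = 0" using \<open>m > 0\<close> by simp
    then have "x1 = 0 + 0 *\<^sub>R y1" "(- m) *\<^sub>R x1 = 0 + 0 *\<^sub>R y1" "y1 = 0 + 1 *\<^sub>R y1"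
      "(- n) *\<^sub>R y1 = 0 + (- n) *\<^sub>R y1" by simp_all
    then show ?thesis by (intro collinear_if_on_line[of _ 0 y1]) blast
  next
    case False
    then have "y1 = (1 / (- (d * n))) *\<^sub>R ((- (d * n)) *\<^sub>R y1)" using \<open>n > 0\<close> by simp
    also have "\<dots> = (1 / (- (d * n))) *\<^sub>R ((1 + c * m) *\<^sub>R x1)" by (simp only: eq)
    also have "\<dots> = ((1 + c * m) / (- (d * n))) *\<^sub>R x1" by simp
    finally have "y1 = 0 + ((1 + c * m) / (- (d * n))) *\<^sub>R x1" by simp
    moreover have "x1 = 0 + 1 *\<^sub>R x1" "(- m) *\<^sub>R x1 = 0 + (- m) *\<^sub>R x1" by simp_all
    moreover from calculation(1) have "(- n) *\<^sub>R y1 = 0 + (- n * ((1 + c * m) / (- (d * n)))) *\<^sub>R x1"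
      by simp
    ultimately show ?thesis by (intro collinear_if_on_line[of _ 0 x1]) blast
  qed
  then show False using assms(1) by simp
qed

lemma vec_angle_ne_pi_if_lines_meet:
  fixes x1 x2 y1 y2 z0 :: "real^2"
  assumes "\<not> collinear {x1, x2, y1, y2}"
    and "z0 \<in> affine hull {x1, y1}" "z0 \<in> affine hull {x2, y2}"
  shows "vec_angle (x2 - y2) (y1 - x1) \<noteq> pi"
proof
  assume "vec_angle (x2 - y2) (y1 - x1) = pi"
  then obtain l where l: "x2 - y2 = (- l) *\<^sub>R (y1 - x1)" using vec_angle_eq_pi_imp_opposite by blast
  obtain a b where ab: "z0 = a *\<^sub>R x1 + b *\<^sub>R y1" "a + b = 1" using assms(2) unfolding affine_hull_2 by blast
  then have z1: "z0 = x1 + b *\<^sub>R (y1 - x1)"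
    by (simp add: algebra_simps) (metis add_diff_cancel_right' scaleR_collapse)
  obtain c d where cd: "z0 = c *\<^sub>R x2 + d *\<^sub>R y2" "c + d = 1" using assms(3) unfolding affine_hull_2 by blast
  then have z2: "z0 = y2 + c *\<^sub>R (x2 - y2)"
    by (simp add: algebra_simps) (metis add_diff_cancel_left' scaleR_collapse add.commute)
  have "y2 = z0 - c *\<^sub>R (x2 - y2)" using z2 by simp
  also have "\<dots> = x1 + b *\<^sub>R (y1 - x1) + (c * l) *\<^sub>R (y1 - x1)" using z1 l by simp
  finally have y2: "y2 = x1 + (b + c * l) *\<^sub>R (y1 - x1)" by (simp add: scaleR_add_left)
  moreover have "x2 = x1 + (b + c * l - l) *\<^sub>R (y1 - x1)"
  proof -
    have "x2 = y2 + (x2 - y2)" by simp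
    also have "\<dots> = x1 + (b + c * l) *\<^sub>R (y1 - x1) + (- l) *\<^sub>R (y1 - x1)" using y2 l by simp
    finally show ?thesis by (simp add: scaleR_add_left algebra_simps)
  qed
  moreover have "x1 = x1 + 0 *\<^sub>R (y1 - x1)" "y1 = x1 + 1 *\<^sub>R (y1 - x1)" by simp_all
  ultimately have "collinear {x1, x2, y1, y2}"
    by (intro collinear_if_on_line[of _ x1 "y1 - x1"]) blast
  then show False using assms(1) by simp
qed

lemma (in planar_model) u_fun_eq_u:
  assumes "e = x1 - z0" "alpha_of x1 x2 y1 y2 = \<alpha>"
    and "s = (if (x2 - z0) \<bullet> perp2 (x1 - z0) \<ge> 0 then 1 else -1)"
  shows "u_fun x1 x2 y1 y2 z0 = u"
proof
  fix x
  have "polar_theta z0 x1 x2 x = Arg2pi (to_complex (x - z0))"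
    unfolding to_complex_def polar_theta_def Let_def using assms by simp
  moreover have "0 \<le> Arg2pi (to_complex (x - z0))" "Arg2pi (to_complex (x - z0)) < 2 * pi"
    using Arg2pi by auto
  ultimately show "u_fun x1 x2 y1 y2 z0 x = u x"
    using k_pos assms(2) prof_h_eq_prof
    by (simp add: u_fun_def polar_rho_def Let_def u_def U_def cmod_to_complex_square)
qed

theorem lemma4p5:
  fixes x1 x2 y1 y2 z0 :: "real^2" and \<mu>1 \<mu>2 \<nu>1 \<nu>2 :: real
  assumes "\<not> collinear {x1, x2, y1, y2}"
    and "\<mu>1 > 0" "\<mu>2 > 0" "\<mu>1 + \<mu>2 = 1"
    and "\<nu>1 > 0" "\<nu>2 > 0" "\<nu>1 + \<nu>2 = 1"
    and "\<mu>1 *\<^sub>R x1 + \<mu>2 *\<^sub>R x2 = 0"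
    and "\<nu>1 *\<^sub>R y1 + \<nu>2 *\<^sub>R y2 = 0"
    and "x1 \<bullet> y1 \<ge> 0"
    and "norm x1 * norm y2 \<le> norm x2 * norm y1"
    and "vec_angle (x2 - y2) (y1 - x1) \<noteq> 0"
    and "z0 \<in> affine hull {x1, y1}" "z0 \<in> affine hull {x2, y2}"
  shows "W2inf_loc (u_fun x1 x2 y1 y2 z0)
    \<and> ((x2 - y2) \<bullet> (y1 - x1) \<noteq> 0 \<longrightarrow> \<not> Ck 2 (u_fun x1 x2 y1 y2 z0))
    \<and> ((\<exists>H. weak_hessian (u_fun x1 x2 y1 y2 z0) H \<and>
           (AE x in lebesgue. \<forall>v. \<bar>v \<bullet> (H x *v v)\<bar> \<le> norm v ^ 2))
       \<longleftrightarrow> (x2 - y2) \<bullet> (y1 - x1) \<le> 0)"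
proof -
  \<comment> \<open>The hypotheses on \<open>x1 \<bullet> y1\<close> and on the norms only fix the labelling in the paper.\<close>
  have "x2 = (- (\<mu>1 / \<mu>2)) *\<^sub>R x1" "y2 = (- (\<nu>1 / \<nu>2)) *\<^sub>R y1"
    using weighted_sum_zero_imp_opposite assms(2,3,5,6,8,9) by blast+
  then have "x1 \<notin> affine hull {x2, y2}"
    using not_in_affine_hull_opposites assms(1,2,3,5,6) by (metis divide_pos_pos)
  then have e: "x1 - z0 \<noteq> 0" using assms(14) by auto
  define A where "A = vec_angle (x2 - y2) (y1 - x1)"
  have A: "0 < A" "A < pi"
    using vec_angle_nonneg vec_angle_le_pi vec_angle_ne_pi_if_lines_meet[OF assms(1,13,14)] assms(12)
    unfolding A_def by (metis order_le_less)+
  define \<alpha> where "\<alpha> = alpha_of x1 x2 y1 y2"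
  have \<alpha>: "\<alpha> = pi / (2 * A)" by (simp add: \<alpha>_def alpha_of_def A_def)
  define s where "s = (if (x2 - z0) \<bullet> perp2 (x1 - z0) \<ge> 0 then 1 else -1 :: real)"
  interpret planar_model \<alpha> z0 "x1 - z0" s
    using A e by unfold_locales (auto simp: \<alpha> s_def field_simps)
  have u: "u_fun x1 x2 y1 y2 z0 = u" by (rule u_fun_eq_u) (simp_all add: \<alpha>_def s_def)
  have "(x2 - y2) \<bullet> (y1 - x1) \<le> 0 \<longleftrightarrow> \<alpha> \<le> 1"
    using inner_nonpos_iff_vec_angle_ge A by (simp add: \<alpha> A_def field_simps)
  then show ?thesis
    unfolding u using W2inf_loc not_Ck2_u weak_hessian_bounded_by_Id_if_alpha_le_1
      no_weak_hessian_bounded_by_Id_if_alpha_gt_1 by (meson not_le)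
qed

end
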